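(* Let $X$ be a Banach space with a normalized 1-unconditional basis $(x_i)_i$. Then $\mathcal{L}_\mathrm{diag}(J(X))\cong J(X)^*$, $\mathbb{R} I\oplus\mathcal{K}_\mathrm{diag}(J(X))\cong\mathcal{J}_*(X)$, $\mathcal{L}_\mathrm{diag}(\mathcal{J}_*(X))\cong\mathcal{J}_*(X)^*$ and $\mathcal{K}_\mathrm{diag}(\mathcal{J}_*(X))\cong J(X)$. More precisely: the map $A:\mathcal{L}_\mathrm{diag}(J(X))\to J(X)^*$, $A(\mathrm{SOT}\text{-}\sum_i\lambda_ie_i^*\otimes e_i)=w^*\text{-}\sum_i\lambda_ie_i^*$, is an onto isomorphism with $\|A\|\|A^{-1}\|\le2$, and the image of $\mathbb{R} I\oplus\mathcal{K}_\mathrm{diag}(J(X))$ under $A$ is $\mathcal{J}_*(X)$; and the map $B:\mathcal{L}_\mathrm{diag}(\mathcal{J}_*(X))\to\mathcal{J}_*(X)^*$, $B(\mathrm{SOT}\text{-}\sum_i\lambda_iv_i^*\otimes v_i)=w^*\text{-}\sum_i\lambda_iv_i^*$, is an onto isomorphism with $\|B\|\|B^{-1}\|\le2$, and the image of $\mathbb{R}I\oplus\mathcal{K}_\mathrm{diag}(\mathcal{J}_*(X))$ under $B$ is $\mathbb{R}e_\omega\oplus J(X)$.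
   Context: The jamesification $J(X)$ is the completion of $c_{00}(\mathbb{N})$ under $\|\sum_ia_ie_i\|=\sup\{\|\sum_n(\sum_{i=k_n}^{m_n}a_i)x_{k_n}\|:1\le k_1\le m_1<k_2\le m_2<\cdots\}$, with unit vector basis $(e_i)$ and biorthogonals $(e_i^* )$. $s\in J(X)^*$ is $s(\sum a_ie_i)=\sum a_i$; $\mathcal{J}_*(X)=\mathbb{R}s\oplus\overline{\mathrm{span}}\{e_i^*\}\subset J(X)^*$, with Schauder basis $v_1=s$, $v_{i+1}=s-\sum_{j=1}^ie_j^*$, and $(v_i^* )\subset\mathcal{J}_*(X)^*$ its biorthogonals; $J(X)$ is identified with $\overline{\mathrm{span}}\{v_i^*\}\subset\mathcal{J}_*(X)^*$ via $e_i=\sum_{j\le i}v_j^*$, and $e_\omega=w^*\text{-}\sum_iv_i^*\in\mathcal{J}_*(X)^*$. For a space $Z$ with Schauder basis $(z_i)$, $z_i^*\otimes z_i$ is the operator $z\mapsto z_i^*(z)z_i$; $\mathcal{L}_\mathrm{diag}(Z)$ are the diagonal operators ($z_j^*(Tz_i)=0$ for $i\ne j$), $\mathcal{K}_\mathrm{diag}(Z)$ the compact ones, and $\mathbb{R}I\oplus\mathcal{K}_\mathrm{diag}(Z)$ the operators $\lambda I+K$ with $K\in\mathcal{K}_\mathrm{diag}(Z)$. *)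

theory Defs
  imports Complex_Main
begin

text \<open>Indices are 0-based (the paper's index i corresponds to i-1 here).
  A real sequence a :: nat => real with finite support stands for a finite linear combination
  of basis vectors.\<close>

definition fin_supp :: "(nat \<Rightarrow> real) \<Rightarrow> bool" where
  "fin_supp a \<longleftrightarrow> finite {i. a i \<noteq> 0}"

definition unit_vec :: "nat \<Rightarrow> nat \<Rightarrow> real" where
  "unit_vec j = (\<lambda>i. if i = j then 1 else 0)"

text \<open>N is the norm of X on finitely supported coefficient sequences w.r.t. the basis (x_i):
  N a = norm of sum_i a_i x_i. The hypotheses say (x_i) is a normalized 1-unconditional basis.\<close>

definition normalized_1unc_basis_norm :: "((nat \<Rightarrow> real) \<Rightarrow> real) \<Rightarrow> bool" where
  "normalized_1unc_basis_norm N \<longleftrightarrow>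
     (\<forall>a b. fin_supp a \<longrightarrow> fin_supp b \<longrightarrow> N (\<lambda>i. a i + b i) \<le> N a + N b) \<and>
     (\<forall>a c. fin_supp a \<longrightarrow> N (\<lambda>i. c * a i) = \<bar>c\<bar> * N a) \<and>
     (\<forall>a. fin_supp a \<longrightarrow> a \<noteq> (\<lambda>i. 0) \<longrightarrow> N a > 0) \<and>
     (\<forall>j. N (unit_vec j) = 1) \<and>
     (\<forall>a \<epsilon>. fin_supp a \<longrightarrow> (\<forall>i. \<epsilon> i = 1 \<or> \<epsilon> i = -1) \<longrightarrow> N (\<lambda>i. \<epsilon> i * a i) = N a)"

fun adm :: "(nat \<times> nat) list \<Rightarrow> bool" where
  "adm [] = True"
| "adm [(k, m)] = (k \<le> m)"
| "adm ((k, m) # (k', m') # r) = (k \<le> m \<and> m < k' \<and> adm ((k', m') # r))"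

definition jam_vec :: "(nat \<Rightarrow> real) \<Rightarrow> (nat \<times> nat) list \<Rightarrow> nat \<Rightarrow> real" where
  "jam_vec a I = (\<lambda>j. \<Sum>(k, m)\<leftarrow>I. if j = k then (\<Sum>i=k..m. a i) else 0)"

text \<open>The norm of J(X) on finitely supported sequences (coefficients w.r.t. (e_i)).\<close>

definition Jnorm :: "((nat \<Rightarrow> real) \<Rightarrow> real) \<Rightarrow> (nat \<Rightarrow> real) \<Rightarrow> real" where
  "Jnorm N a = Sup {N (jam_vec a I) | I. adm I}"

text \<open>Generic constructions relative to a space Z with Schauder basis (z_i), given by its norm M
  on finitely supported coefficient sequences (span of the basis is dense in Z).\<close>

definition pairing :: "(nat \<Rightarrow> real) \<Rightarrow> (nat \<Rightarrow> real) \<Rightarrow> real" where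
  "pairing f a = (\<Sum>i\<in>{i. a i \<noteq> 0}. f i * a i)"

text \<open>Z^*: a functional phi is represented by the sequence (phi(z_i))_i\<close>

definition dual_space :: "((nat \<Rightarrow> real) \<Rightarrow> real) \<Rightarrow> (nat \<Rightarrow> real) set" where
  "dual_space M = {f. bdd_above {\<bar>pairing f a\<bar> | a. fin_supp a \<and> M a \<le> 1}}"

definition dual_norm :: "((nat \<Rightarrow> real) \<Rightarrow> real) \<Rightarrow> (nat \<Rightarrow> real) \<Rightarrow> real" where
  "dual_norm M f = Sup {\<bar>pairing f a\<bar> | a. fin_supp a \<and> M a \<le> 1}"

text \<open>L_diag(Z): a diagonal operator T with T z_i = lambda_i z_i is represented by lambda\<close>

definition Ldiag :: "((nat \<Rightarrow> real) \<Rightarrow> real) \<Rightarrow> (nat \<Rightarrow> real) set" where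
  "Ldiag M = {lam. bdd_above {M (\<lambda>i. lam i * a i) | a. fin_supp a \<and> M a \<le> 1}}"

definition op_norm :: "((nat \<Rightarrow> real) \<Rightarrow> real) \<Rightarrow> (nat \<Rightarrow> real) \<Rightarrow> real" where
  "op_norm M lam = Sup {M (\<lambda>i. lam i * a i) | a. fin_supp a \<and> M a \<le> 1}"

definition Kdiag :: "((nat \<Rightarrow> real) \<Rightarrow> real) \<Rightarrow> (nat \<Rightarrow> real) set" where
  "Kdiag M = {lam \<in> Ldiag M. \<forall>\<epsilon>>0. \<exists>F. finite F \<and> (\<forall>b\<in>F. fin_supp b) \<and>
      (\<forall>a. fin_supp a \<and> M a \<le> 1 \<longrightarrow> (\<exists>b\<in>F. M (\<lambda>i. lam i * a i - b i) < \<epsilon>))}"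

definition RI_Kdiag :: "((nat \<Rightarrow> real) \<Rightarrow> real) \<Rightarrow> (nat \<Rightarrow> real) set" where
  "RI_Kdiag M = {lam. \<exists>c \<mu>. \<mu> \<in> Kdiag M \<and> lam = (\<lambda>i. c + \<mu> i)}"

text \<open>closed span of the biorthogonal functionals (z_i^* ) inside Z^*\<close>

definition cspan_dual :: "((nat \<Rightarrow> real) \<Rightarrow> real) \<Rightarrow> (nat \<Rightarrow> real) set" where
  "cspan_dual M = {f \<in> dual_space M.
      (\<lambda>n. dual_norm M (\<lambda>i. if i < n then 0 else f i)) \<longlonglongrightarrow> 0}"

text \<open>R w + closed span (z_i^* ), where w is the functional with w(z_i) = 1 for all i\<close>

definition R_one_cspan_dual :: "((nat \<Rightarrow> real) \<Rightarrow> real) \<Rightarrow> (nat \<Rightarrow> real) set" where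
  "R_one_cspan_dual M = {f. \<exists>c. (\<lambda>i. f i - c) \<in> cspan_dual M}"

text \<open>The norm of J_*(X) on finite combinations sum_j beta_j v_j, where v_0 = s and
  v_{j+1} = s - sum_{i<=j} e_i^*, so (sum_j beta_j v_j)(e_i) = sum_{j<=i} beta_j.\<close>

definition Jsnorm :: "((nat \<Rightarrow> real) \<Rightarrow> real) \<Rightarrow> (nat \<Rightarrow> real) \<Rightarrow> real" where
  "Jsnorm N \<beta> = dual_norm (Jnorm N) (\<lambda>i. \<Sum>j\<le>i. \<beta> j)"

end

theory Submission
  imports Defs
begin

text \<open>Both spaces carry a norm \<open>M\<close> on finitely supported sequences for which the unit vectors
  form a basis and the summing functional \<open>s\<close> has norm at most \<open>1\<close>. Since
  \<open>\<langle>\<lambda>, a\<rangle> = s(\<lambda> a)\<close>, every diagonal operator \<open>a \<mapsto> \<lambda> a\<close> gives a functional of no larger norm.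
  The converse, with constant \<open>2\<close>, is a multiplier estimate \<open>M(\<lambda> a) \<le> 2 \<parallel>\<lambda>\<parallel>\<^sup>* M(a)\<close>. For \<open>J(X)\<close>
  it is obtained by testing \<open>\<lambda> a\<close> on an admissible family and pairing with a norming
  functional of \<open>X\<close>, which splits each test block into a part inside and a part straddling it.
  For \<open>J\<^sub>*(X)\<close> Abel summation turns it into the fact that \<open>J(X)\<close> is a Banach algebra for the
  pointwise product of tail sums. Compact diagonal operators are then exactly the functionals
  whose tails tend to zero in norm, i.e. the closed span of the biorthogonal functionals.\<close>

lemma fin_supp_iff: "fin_supp a \<longleftrightarrow> (\<exists>L. \<forall>i\<ge>L. a i = 0)"
proof
  assume "fin_supp a"
  then obtain L where "\<forall>i\<in>{i. a i \<noteq> 0}. i < L"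
    using finite_nat_set_iff_bounded by (auto simp: fin_supp_def)
  then show "\<exists>L. \<forall>i\<ge>L. a i = 0" by (meson leD mem_Collect_eq)
next
  assume "\<exists>L. \<forall>i\<ge>L. a i = 0"
  then obtain L where "\<forall>i\<ge>L. a i = 0" by blast
  then have "{i. a i \<noteq> 0} \<subseteq> {..<L}" by (auto simp: not_less[symmetric])
  then show "fin_supp a" by (simp add: fin_supp_def finite_subset)
qed

lemma fin_suppI: "(\<And>i. i \<ge> L \<Longrightarrow> a i = 0) \<Longrightarrow> fin_supp a"
  using fin_supp_iff by blast

lemma fin_suppE:
  assumes "fin_supp a"
  obtains L where "L \<ge> lb" "\<And>i. i \<ge> L \<Longrightarrow> a i = 0"
proof -
  obtain L where "\<And>i. i \<ge> L \<Longrightarrow> a i = 0" using assms fin_supp_iff by blast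
  then show ?thesis using that[of "max L lb"] by auto
qed

lemma fin_supp_finite_set: "finite S \<Longrightarrow> (\<And>i. i \<notin> S \<Longrightarrow> a i = 0) \<Longrightarrow> fin_supp a"
  unfolding fin_supp_def by (metis (mono_tags) mem_Collect_eq rev_finite_subset subsetI)

lemma fin_supp_zero [simp]: "fin_supp (\<lambda>i. 0)"
  by (simp add: fin_supp_def)

lemma fin_supp_unit_vec [simp]: "fin_supp (unit_vec j)"
  by (rule fin_suppI[of "Suc j"]) (auto simp: unit_vec_def)

lemma fin_supp_below: "fin_supp (\<lambda>i. if i < n then f i else 0)"
  by (rule fin_suppI[of n]) auto

lemma fin_supp_add: "fin_supp a \<Longrightarrow> fin_supp b \<Longrightarrow> fin_supp (\<lambda>i. a i + b i)"
  unfolding fin_supp_def by (rule finite_subset[of _ "{i. a i \<noteq> 0} \<union> {i. b i \<noteq> 0}"]) auto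

lemma fin_supp_diff: "fin_supp a \<Longrightarrow> fin_supp b \<Longrightarrow> fin_supp (\<lambda>i. a i - b i)"
  unfolding fin_supp_def by (rule finite_subset[of _ "{i. a i \<noteq> 0} \<union> {i. b i \<noteq> 0}"]) auto

lemma fin_supp_mult: "fin_supp a \<Longrightarrow> fin_supp (\<lambda>i. f i * a i)"
  by (erule fin_suppE[where lb=0], rule fin_suppI) auto

lemma fin_supp_mult_right: "fin_supp a \<Longrightarrow> fin_supp (\<lambda>i. a i * f i)"
  by (erule fin_suppE[where lb=0], rule fin_suppI) auto

lemma fin_supp_uminus: "fin_supp a \<Longrightarrow> fin_supp (\<lambda>i. - a i)"
  by (erule fin_suppE[where lb=0], rule fin_suppI) auto

lemma fin_supp_restrict: "fin_supp a \<Longrightarrow> fin_supp (\<lambda>i. if P i then a i else 0)"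
  by (erule fin_suppE[where lb=0], rule fin_suppI) auto

lemma fin_supp_drop: "fin_supp a \<Longrightarrow> fin_supp (\<lambda>i. if P i then 0 else a i)"
  by (erule fin_suppE[where lb=0], rule fin_suppI) auto

lemma pairing_eq_sum:
  assumes "finite S" "{i. a i \<noteq> 0} \<subseteq> S"
  shows "pairing f a = (\<Sum>i\<in>S. f i * a i)"
  unfolding pairing_def by (rule sum.mono_neutral_left) (use assms in auto)

lemma pairing_lessThan:
  assumes "\<And>i. i \<ge> L \<Longrightarrow> a i = 0"
  shows "pairing f a = (\<Sum>i<L. f i * a i)"
  by (rule pairing_eq_sum) (use assms in \<open>auto simp: not_less[symmetric]\<close>)

lemma pairing_add:
  assumes "fin_supp a" "fin_supp b"
  shows "pairing f (\<lambda>i. a i + b i) = pairing f a + pairing f b"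
proof -
  obtain L1 where "\<And>i. i \<ge> L1 \<Longrightarrow> a i = 0" using assms(1) fin_supp_iff by blast
  moreover obtain L where "L \<ge> L1" "\<And>i. i \<ge> L \<Longrightarrow> b i = 0" using assms(2) fin_suppE[of b L1] by blast
  ultimately show ?thesis
    by (subst (1 2 3) pairing_lessThan[of L]) (auto simp: algebra_simps sum.distrib)
qed

lemma pairing_scale:
  assumes "fin_supp a"
  shows "pairing f (\<lambda>i. c * a i) = c * pairing f a"
proof -
  obtain L where "\<And>i. i \<ge> L \<Longrightarrow> a i = 0" using assms fin_supp_iff by blast
  then show ?thesis
    by (subst (1 2) pairing_lessThan[of L]) (auto simp: algebra_simps sum_distrib_left)
qed

lemma pairing_uminus: "fin_supp a \<Longrightarrow> pairing f (\<lambda>i. - a i) = - pairing f a"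
  using pairing_scale[of a f "-1"] by simp

lemma pairing_diff:
  "fin_supp a \<Longrightarrow> fin_supp b \<Longrightarrow> pairing f (\<lambda>i. a i - b i) = pairing f a - pairing f b"
  using pairing_add[of a "\<lambda>i. - b i" f] pairing_uminus[of b f] fin_supp_uminus[of b] by simp

lemma pairing_zero [simp]: "pairing f (\<lambda>i. 0) = 0"
  by (simp add: pairing_def)

lemma pairing_unit_vec [simp]: "pairing f (unit_vec j) = f j"
  by (subst pairing_lessThan[of "Suc j"]) (auto simp: unit_vec_def)

lemma pairing_unit_vec_left:
  assumes "fin_supp x"
  shows "pairing (unit_vec j) x = x j"
proof -
  obtain L where "L \<ge> Suc j" "\<And>i. i \<ge> L \<Longrightarrow> x i = 0" using assms fin_suppE by blast
  then have "pairing (unit_vec j) x = (\<Sum>i<L. unit_vec j i * x i)"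
    by (intro pairing_lessThan) blast
  also have "\<dots> = (\<Sum>i<L. if i = j then x j else 0)"
    by (rule sum.cong) (auto simp: unit_vec_def)
  also have "\<dots> = x j" using \<open>L \<ge> Suc j\<close> by simp
  finally show ?thesis .
qed

lemma pairing_add_left: "pairing (\<lambda>i. f i + h i) a = pairing f a + pairing h a"
  unfolding pairing_def by (simp add: algebra_simps sum.distrib)

lemma pairing_scale_left: "pairing (\<lambda>i. r * f i) a = r * pairing f a"
  unfolding pairing_def by (simp add: algebra_simps sum_distrib_left)

lemma pairing_diff_left: "pairing (\<lambda>i. f i - h i) a = pairing f a - pairing h a"
  unfolding pairing_def by (simp add: algebra_simps sum_subtractf)

lemma pairing_eq_pairing_one_mult: "fin_supp a \<Longrightarrow> pairing f a = pairing (\<lambda>_. 1) (\<lambda>i. f i * a i)"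
proof -
  assume "fin_supp a"
  then obtain L where "\<And>i. i \<ge> L \<Longrightarrow> a i = 0" using fin_supp_iff by blast
  then show ?thesis by (subst (1 2) pairing_lessThan[of L]) auto
qed

lemma pairing_drop_below:
  "fin_supp a \<Longrightarrow> pairing (\<lambda>i. if i < n then 0 else f i) a = pairing f (\<lambda>i. if i < n then 0 else a i)"
proof -
  assume "fin_supp a"
  then obtain L where "\<And>i. i \<ge> L \<Longrightarrow> a i = 0" using fin_supp_iff by blast
  then show ?thesis by (subst (1 2) pairing_lessThan[of L]) (auto intro!: sum.cong)
qed

definition l1 :: "(nat \<Rightarrow> real) \<Rightarrow> real" where
  "l1 a = (\<Sum>i\<in>{i. a i \<noteq> 0}. \<bar>a i\<bar>)"

lemma l1_eq_sum: "finite S \<Longrightarrow> (\<And>i. i \<notin> S \<Longrightarrow> x i = 0) \<Longrightarrow> l1 x = (\<Sum>i\<in>S. \<bar>x i\<bar>)"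
  unfolding l1_def by (rule sum.mono_neutral_left) auto

locale fs_seminorm =
  fixes M :: "(nat \<Rightarrow> real) \<Rightarrow> real"
  assumes triangle: "fin_supp a \<Longrightarrow> fin_supp b \<Longrightarrow> M (\<lambda>i. a i + b i) \<le> M a + M b"
    and homogeneous: "fin_supp a \<Longrightarrow> M (\<lambda>i. c * a i) = \<bar>c\<bar> * M a"
begin

lemma zero [simp]: "M (\<lambda>i. 0) = 0"
  using homogeneous[OF fin_supp_zero, of 0] by simp

lemma uminus: "fin_supp a \<Longrightarrow> M (\<lambda>i. - a i) = M a"
  using homogeneous[of a "-1"] by simp

lemma nonneg: "fin_supp a \<Longrightarrow> M a \<ge> 0"
  using triangle[of a "\<lambda>i. - a i"] uminus[of a] fin_supp_uminus[of a] by simp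

lemma diff: "fin_supp a \<Longrightarrow> fin_supp b \<Longrightarrow> M (\<lambda>i. a i - b i) \<le> M a + M b"
  using triangle[of a "\<lambda>i. - b i"] uminus[of b] fin_supp_uminus[of b] by simp

end

text \<open>Hahn--Banach in the finitely supported setting: a norming functional for \<open>c\<close> is built
  by extending \<open>t c \<mapsto> t M c\<close> one unit vector at a time.\<close>

definition span_init :: "(nat \<Rightarrow> real) \<Rightarrow> nat \<Rightarrow> (nat \<Rightarrow> real) set" where
  "span_init c K = {\<lambda>i. t * c i + d i | t d. \<forall>i\<ge>K. d i = 0}"

lemma span_init_fin_supp: "fin_supp c \<Longrightarrow> x \<in> span_init c K \<Longrightarrow> fin_supp x"
  unfolding span_init_def by (auto intro!: fin_supp_add fin_supp_mult intro: fin_suppI)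

lemma span_init_add:
  assumes "x \<in> span_init c K" "y \<in> span_init c K"
  shows "(\<lambda>i. x i + y i) \<in> span_init c K"
proof -
  obtain t d t' d' where "\<forall>i\<ge>K. d i = 0" "x = (\<lambda>i. t * c i + d i)"
    "\<forall>i\<ge>K. d' i = 0" "y = (\<lambda>i. t' * c i + d' i)"
    using assms unfolding span_init_def by blast
  then show ?thesis unfolding span_init_def
    by (intro CollectI exI[of _ "t + t'"] exI[of _ "\<lambda>i. d i + d' i"]) (auto simp: algebra_simps)
qed

lemma span_init_scale: "x \<in> span_init c K \<Longrightarrow> (\<lambda>i. r * x i) \<in> span_init c K"
  unfolding span_init_def
  by (force intro: exI[of _ "r * _"] exI[of _ "\<lambda>i. r * _ i"] simp: algebra_simps)

lemma span_init_generator: "c \<in> span_init c K"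
  unfolding span_init_def by (intro CollectI exI[of _ 1] exI[of _ "\<lambda>i. 0"]) auto

lemma span_init_below: "(\<forall>i\<ge>K. d i = 0) \<Longrightarrow> d \<in> span_init c K"
  unfolding span_init_def by (intro CollectI exI[of _ 0] exI[of _ d]) auto

lemma span_init_zero: "(\<lambda>i. 0) \<in> span_init c K"
  by (rule span_init_below) simp

lemma span_init_annihilator:
  assumes fc: "fin_supp c" and "c K = 0 \<or> (\<exists>j>K. c j \<noteq> 0)"
  obtains w where "\<forall>x\<in>span_init c K. pairing w x = 0" "w K = 1"
  using assms(2)
proof
  assume "c K = 0"
  then have "\<forall>x\<in>span_init c K. pairing (unit_vec K) x = 0"
    using span_init_fin_supp[OF fc] by (auto simp: span_init_def pairing_unit_vec_left)
  then show ?thesis using that by (simp add: unit_vec_def)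
next
  assume "\<exists>j>K. c j \<noteq> 0"
  then obtain j where j: "j > K" "c j \<noteq> 0" by blast
  define w where "w = (\<lambda>i. unit_vec K i - (c K / c j) * unit_vec j i)"
  have "pairing w x = 0" if x: "x \<in> span_init c K" for x
  proof -
    obtain t d where d: "\<forall>i\<ge>K. d i = 0" and x_eq: "x = (\<lambda>i. t * c i + d i)"
      using x unfolding span_init_def by blast
    have "pairing w x = x K - (c K / c j) * x j"
      unfolding w_def pairing_diff_left pairing_scale_left
      using pairing_unit_vec_left[OF span_init_fin_supp[OF fc x]] by simp
    also have "\<dots> = 0" using d j by (simp add: x_eq field_simps)
    finally show ?thesis .
  qed
  moreover have "w K = 1" using j by (simp add: w_def unit_vec_def)
  ultimately show ?thesis using that by blast
qed

lemma span_init_Suc_subset: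
  assumes cK: "c K \<noteq> 0" and tail: "\<forall>j>K. c j = 0"
  shows "span_init c (Suc K) \<subseteq> span_init c K"
proof
  fix x assume "x \<in> span_init c (Suc K)"
  then obtain t d where d: "\<forall>i\<ge>Suc K. d i = 0" and x: "x = (\<lambda>i. t * c i + d i)"
    unfolding span_init_def by blast
  define d' where "d' = (\<lambda>i. d i - (d K / c K) * c i)"
  have "x = (\<lambda>i. (t + d K / c K) * c i + d' i)"
    using x by (auto simp: d'_def algebra_simps)
  moreover have "\<forall>i\<ge>K. d' i = 0" unfolding d'_def
    using d cK tail by (metis Suc_le_eq diff_self le_eq_less_or_eq mult_zero_right nonzero_eq_divide_eq)
  ultimately show "x \<in> span_init c K" unfolding span_init_def by blast
qed

context fs_seminorm
begin

lemma extend_by_line: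
  assumes W_scale: "\<And>x r. x \<in> W \<Longrightarrow> (\<lambda>i. r * x i) \<in> W"
    and W_fin: "\<And>x. x \<in> W \<Longrightarrow> fin_supp x" and fe: "fin_supp e"
    and lower: "\<And>x. x \<in> W \<Longrightarrow> pairing g x - M (\<lambda>i. x i - e i) \<le> \<tau>"
    and upper: "\<And>x. x \<in> W \<Longrightarrow> \<tau> \<le> M (\<lambda>i. x i + e i) - pairing g x"
    and dominated: "\<And>x. x \<in> W \<Longrightarrow> pairing g x \<le> M x" and x: "x \<in> W"
  shows "pairing g x + s * \<tau> \<le> M (\<lambda>i. x i + s * e i)"
proof -
  have fx: "fin_supp x" using W_fin[OF x] .
  consider "s > 0" | "s < 0" | "s = 0" by linarith
  then show ?thesis
  proof cases
    case 1
    define y where "y = (\<lambda>i. (1 / s) * x i)"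
    have y: "y \<in> W" unfolding y_def by (rule W_scale[OF x])
    have "(\<lambda>i. x i + s * e i) = (\<lambda>i. s * (y i + e i))" using 1 by (auto simp: y_def field_simps)
    then have "M (\<lambda>i. x i + s * e i) = s * M (\<lambda>i. y i + e i)"
      using homogeneous[OF fin_supp_add[OF W_fin[OF y] fe], of s] 1 by simp
    moreover have "pairing g y = (1 / s) * pairing g x" unfolding y_def by (rule pairing_scale[OF fx])
    moreover have "s * \<tau> \<le> s * (M (\<lambda>i. y i + e i) - pairing g y)"
      using upper[OF y] 1 by (simp add: mult_left_mono)
    ultimately show ?thesis using 1 by (simp add: right_diff_distrib)
  next
    case 2
    define y where "y = (\<lambda>i. (1 / - s) * x i)"
    have y: "y \<in> W" unfolding y_def by (rule W_scale[OF x])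
    have "(\<lambda>i. x i + s * e i) = (\<lambda>i. (- s) * (y i - e i))" using 2 by (auto simp: y_def field_simps)
    then have "M (\<lambda>i. x i + s * e i) = - s * M (\<lambda>i. y i - e i)"
      using homogeneous[OF fin_supp_diff[OF W_fin[OF y] fe], of "- s"] 2 by simp
    moreover have "pairing g y = (1 / - s) * pairing g x" unfolding y_def by (rule pairing_scale[OF fx])
    moreover have "- s * (pairing g y - M (\<lambda>i. y i - e i)) \<le> - s * \<tau>"
      using lower[OF y] 2 by (simp add: mult_left_mono)
    ultimately show ?thesis using 2 by (simp add: right_diff_distrib)
  next
    case 3
    then show ?thesis using dominated[OF x] by simp
  qed
qed

lemma separating_value:
  assumes W_add: "\<And>x y. x \<in> W \<Longrightarrow> y \<in> W \<Longrightarrow> (\<lambda>i. x i + y i) \<in> W"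
    and W_fin: "\<And>x. x \<in> W \<Longrightarrow> fin_supp x" and W_zero: "(\<lambda>i. 0) \<in> W" and fe: "fin_supp e"
    and dominated: "\<forall>x\<in>W. pairing g x \<le> M x"
  obtains \<tau> where "\<And>x. x \<in> W \<Longrightarrow> pairing g x - M (\<lambda>i. x i - e i) \<le> \<tau>"
    "\<And>x. x \<in> W \<Longrightarrow> \<tau> \<le> M (\<lambda>i. x i + e i) - pairing g x"
proof -
  have sandwich: "pairing g x - M (\<lambda>i. x i - e i) \<le> M (\<lambda>i. y i + e i) - pairing g y"
    if x: "x \<in> W" and y: "y \<in> W" for x y
  proof -
    have fx: "fin_supp x" and fy: "fin_supp y" using x y W_fin by auto
    have "pairing g (\<lambda>i. x i + y i) \<le> M (\<lambda>i. (x i - e i) + (y i + e i))"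
      using dominated W_add[OF x y] by simp
    also have "\<dots> \<le> M (\<lambda>i. x i - e i) + M (\<lambda>i. y i + e i)"
      by (rule triangle) (auto intro: fin_supp_diff fin_supp_add fx fy fe)
    finally show ?thesis using pairing_add[OF fx fy, of g] by simp
  qed
  define S where "S = {pairing g x - M (\<lambda>i. x i - e i) | x. x \<in> W}"
  have "S \<noteq> {}" unfolding S_def using W_zero by blast
  moreover have "bdd_above S" unfolding S_def bdd_above_def using sandwich W_zero by blast
  ultimately show ?thesis
    using that[of "Sup S"] sandwich unfolding S_def by (auto intro!: cSup_upper cSup_least)
qed

lemma dominated_extension_step:
  assumes fc: "fin_supp c"
    and dominated: "\<forall>x\<in>span_init c K. pairing g x \<le> M x"
    and w: "\<forall>x\<in>span_init c K. pairing w x = 0" and wK: "w K = 1"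
  shows "\<exists>g'. (\<forall>x\<in>span_init c (Suc K). pairing g' x \<le> M x) \<and> pairing g' c = pairing g c"
proof -
  let ?W = "span_init c K"
  define e where "e = unit_vec K"
  have fe: "fin_supp e" unfolding e_def by simp
  have W_add: "\<And>x y. x \<in> ?W \<Longrightarrow> y \<in> ?W \<Longrightarrow> (\<lambda>i. x i + y i) \<in> ?W" by (rule span_init_add)
  have W_fin: "\<And>x. x \<in> ?W \<Longrightarrow> fin_supp x" by (rule span_init_fin_supp[OF fc])
  obtain \<tau> where lower: "\<And>x. x \<in> ?W \<Longrightarrow> pairing g x - M (\<lambda>i. x i - e i) \<le> \<tau>"
    and upper: "\<And>x. x \<in> ?W \<Longrightarrow> \<tau> \<le> M (\<lambda>i. x i + e i) - pairing g x"
    using separating_value[OF W_add W_fin span_init_zero fe dominated] by blast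
  define g' where "g' = (\<lambda>i. g i + (\<tau> - g K) * w i)"
  have pairing_g': "pairing g' z = pairing g z + (\<tau> - g K) * pairing w z" for z
    unfolding g'_def by (simp add: pairing_add_left pairing_scale_left)
  have "pairing g' z \<le> M z" if z_span: "z \<in> span_init c (Suc K)" for z
  proof -
    obtain t d where d: "\<forall>i\<ge>Suc K. d i = 0" and z: "z = (\<lambda>i. t * c i + d i)"
      using z_span unfolding span_init_def by blast
    define x where "x = (\<lambda>i. t * c i + (if i = K then 0 else d i))"
    have x: "x \<in> ?W" unfolding span_init_def x_def
      by (intro CollectI exI[of _ t] exI[of _ "\<lambda>i. if i = K then 0 else d i"]) (use d in auto)
    have fx: "fin_supp x" using span_init_fin_supp[OF fc x] .
    have z_split: "z = (\<lambda>i. x i + d K * e i)" by (auto simp: z x_def e_def unit_vec_def)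
    have "pairing g' z = pairing g x + d K * \<tau>"
      using w x wK by (simp add: z_split pairing_g' pairing_add[OF fx fin_supp_mult[OF fe]]
          pairing_scale[OF fe] algebra_simps) (simp add: e_def)
    also have "\<dots> \<le> M z"
      unfolding z_split
      using dominated
      by (intro extend_by_line[OF span_init_scale span_init_fin_supp[OF fc] fe lower upper _ x])
        auto
    finally show ?thesis .
  qed
  moreover have "pairing g' c = pairing g c" using pairing_g' w span_init_generator by simp
  ultimately show ?thesis by blast
qed

lemma dominated_functional_on_span_init_0:
  assumes fc: "fin_supp c"
  shows "\<exists>g. (\<forall>x\<in>span_init c 0. pairing g x \<le> M x) \<and> pairing g c = M c"
proof (cases "c = (\<lambda>i. 0)")
  case True
  have "pairing (\<lambda>i. 0) x \<le> M x" if "x \<in> span_init c 0" for x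
  proof -
    have "x = (\<lambda>i. 0)" using that True by (auto simp: span_init_def)
    then show ?thesis by simp
  qed
  then show ?thesis using True by (intro exI[of _ "\<lambda>i. 0"]) simp
next
  case False
  then obtain j where cj: "c j \<noteq> 0" by auto
  define g where "g = (\<lambda>i. (M c / c j) * unit_vec j i)"
  have pairing_g: "pairing g x = (M c / c j) * x j" if "fin_supp x" for x
    unfolding g_def by (simp only: pairing_scale_left pairing_unit_vec_left[OF that])
  have "pairing g x \<le> M x" if "x \<in> span_init c 0" for x
  proof -
    obtain t where x: "x = (\<lambda>i. t * c i)" using \<open>x \<in> span_init c 0\<close> unfolding span_init_def by auto
    have "pairing g x = t * M c" using pairing_g[of x] cj fin_supp_mult[OF fc] x by simp
    also have "\<dots> \<le> \<bar>t\<bar> * M c" using nonneg[OF fc] by (simp add: mult_right_mono)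
    also have "\<dots> = M x" using homogeneous[OF fc] x by simp
    finally show ?thesis .
  qed
  moreover have "pairing g c = M c" using pairing_g[OF fc] cj by simp
  ultimately show ?thesis by blast
qed

lemma dominated_functional_on_span_init:
  assumes fc: "fin_supp c"
  shows "\<exists>g. (\<forall>x\<in>span_init c K. pairing g x \<le> M x) \<and> pairing g c = M c"
proof (induction K)
  case 0
  show ?case by (rule dominated_functional_on_span_init_0[OF fc])
next
  case (Suc K)
  then obtain g where dominated: "\<forall>x\<in>span_init c K. pairing g x \<le> M x" and gc: "pairing g c = M c"
    by blast
  show ?case
  proof (cases "c K = 0 \<or> (\<exists>j>K. c j \<noteq> 0)")
    case True
    then obtain w where "\<forall>x\<in>span_init c K. pairing w x = 0" "w K = 1"
      using span_init_annihilator[OF fc] by blast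
    then show ?thesis using dominated_extension_step[OF fc dominated] gc by auto
  next
    case False
    then have "span_init c (Suc K) \<subseteq> span_init c K" by (intro span_init_Suc_subset) auto
    then show ?thesis using dominated gc by blast
  qed
qed

lemma norming_functional:
  assumes "fin_supp c"
  obtains g where "\<And>d. (\<And>i. i \<ge> L \<Longrightarrow> d i = 0) \<Longrightarrow> \<bar>pairing g d\<bar> \<le> M d" "pairing g c = M c"
proof -
  obtain g where dominated: "\<forall>x\<in>span_init c L. pairing g x \<le> M x" and gc: "pairing g c = M c"
    using dominated_functional_on_span_init[OF assms] by blast
  have "\<bar>pairing g d\<bar> \<le> M d" if d: "\<And>i. i \<ge> L \<Longrightarrow> d i = 0" for d
  proof -
    have fd: "fin_supp d" using d fin_suppI by blast
    have "pairing g d \<le> M d" "pairing g (\<lambda>i. - d i) \<le> M (\<lambda>i. - d i)"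
      using dominated span_init_below[of L d] span_init_below[of L "\<lambda>i. - d i"] d by auto
    then show ?thesis using pairing_uminus[OF fd] uminus[OF fd] by auto
  qed
  then show ?thesis using gc that by blast
qed

end

subsection \<open>Norms with a bounded summing functional and a basis\<close>

text \<open>\<open>le_l1\<close> says \<open>\<parallel>e\<^sub>i\<parallel> \<le> 1\<close>, \<open>coord_le\<close> and \<open>drop_le\<close> that the coordinate functionals and
  the tail projections are bounded (so \<open>(e\<^sub>i)\<close> is a Schauder basis of the completion), and
  \<open>summing_le\<close> that the summing functional \<open>s\<close> has norm at most \<open>1\<close>.\<close>

locale summing_basis_norm = fs_seminorm M for M +
  fixes C_coord C_tail :: real
  assumes le_l1: "fin_supp a \<Longrightarrow> M a \<le> l1 a"
    and coord_le: "fin_supp a \<Longrightarrow> \<bar>a j\<bar> \<le> C_coord * M a"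
    and summing_le: "fin_supp a \<Longrightarrow> \<bar>pairing (\<lambda>_. 1) a\<bar> \<le> M a"
    and drop_le: "fin_supp a \<Longrightarrow> M (\<lambda>i. if i < n then 0 else a i) \<le> C_tail * M a"
    and C_coord_nonneg: "C_coord \<ge> 0" and C_tail_nonneg: "C_tail \<ge> 0"
begin

lemma eq_zeroD: "fin_supp a \<Longrightarrow> M a = 0 \<Longrightarrow> a = (\<lambda>i. 0)"
  using coord_le[of a] by (auto simp: fun_eq_iff)

lemma dual_norm_ge:
  "f \<in> dual_space M \<Longrightarrow> fin_supp a \<Longrightarrow> M a \<le> 1 \<Longrightarrow> \<bar>pairing f a\<bar> \<le> dual_norm M f"
  unfolding dual_norm_def dual_space_def by (rule cSup_upper) auto

lemma dual_norm_le:
  "(\<And>a. fin_supp a \<Longrightarrow> M a \<le> 1 \<Longrightarrow> \<bar>pairing f a\<bar> \<le> B) \<Longrightarrow> dual_norm M f \<le> B"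
  unfolding dual_norm_def by (rule cSup_least) (auto intro: exI[of _ "\<lambda>i. 0"])

lemma dual_spaceI:
  "(\<And>a. fin_supp a \<Longrightarrow> M a \<le> 1 \<Longrightarrow> \<bar>pairing f a\<bar> \<le> B) \<Longrightarrow> f \<in> dual_space M"
  unfolding dual_space_def bdd_above_def by blast

lemma dual_norm_nonneg: "f \<in> dual_space M \<Longrightarrow> dual_norm M f \<ge> 0"
  using dual_norm_ge[of f "\<lambda>i. 0"] by simp

lemma op_norm_ge:
  "f \<in> Ldiag M \<Longrightarrow> fin_supp a \<Longrightarrow> M a \<le> 1 \<Longrightarrow> M (\<lambda>i. f i * a i) \<le> op_norm M f"
  unfolding op_norm_def Ldiag_def by (rule cSup_upper) auto

lemma op_norm_le:
  "(\<And>a. fin_supp a \<Longrightarrow> M a \<le> 1 \<Longrightarrow> M (\<lambda>i. f i * a i) \<le> B) \<Longrightarrow> op_norm M f \<le> B"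
  unfolding op_norm_def by (rule cSup_least) (auto intro: exI[of _ "\<lambda>i. 0"])

lemma LdiagI:
  "(\<And>a. fin_supp a \<Longrightarrow> M a \<le> 1 \<Longrightarrow> M (\<lambda>i. f i * a i) \<le> B) \<Longrightarrow> f \<in> Ldiag M"
  unfolding Ldiag_def bdd_above_def by blast

lemma pairing_le_dual_norm:
  assumes f: "f \<in> dual_space M" and fa: "fin_supp a"
  shows "\<bar>pairing f a\<bar> \<le> dual_norm M f * M a"
proof (cases "M a = 0")
  case True
  then show ?thesis using eq_zeroD[OF fa] by simp
next
  case False
  then have pos: "M a > 0" using nonneg[OF fa] by simp
  define a' where "a' = (\<lambda>i. (1 / M a) * a i)"
  have fa': "fin_supp a'" unfolding a'_def by (rule fin_supp_mult[OF fa])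
  have "M a' = 1" unfolding a'_def using homogeneous[OF fa, of "1 / M a"] pos by simp
  then have "\<bar>pairing f a'\<bar> \<le> dual_norm M f" using dual_norm_ge[OF f fa'] by simp
  moreover have "pairing f a' = (1 / M a) * pairing f a" unfolding a'_def by (rule pairing_scale[OF fa])
  ultimately show ?thesis using pos by (simp add: abs_divide divide_le_eq)
qed

text \<open>\<open>\<langle>f, a\<rangle> = s(f a)\<close>, and \<open>\<parallel>s\<parallel> \<le> 1\<close>.\<close>

lemma Ldiag_subset_dual_space:
  assumes f: "f \<in> Ldiag M"
  shows "f \<in> dual_space M" "dual_norm M f \<le> op_norm M f"
proof -
  have *: "\<bar>pairing f a\<bar> \<le> op_norm M f" if fa: "fin_supp a" and Ma: "M a \<le> 1" for a
  proof -
    have "\<bar>pairing f a\<bar> = \<bar>pairing (\<lambda>_. 1) (\<lambda>i. f i * a i)\<bar>"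
      using pairing_eq_pairing_one_mult[OF fa] by simp
    also have "\<dots> \<le> M (\<lambda>i. f i * a i)" by (rule summing_le[OF fin_supp_mult[OF fa]])
    also have "\<dots> \<le> op_norm M f" by (rule op_norm_ge[OF f fa Ma])
    finally show ?thesis .
  qed
  show "f \<in> dual_space M" "dual_norm M f \<le> op_norm M f"
    using dual_spaceI[OF *] dual_norm_le[OF *] by blast+
qed

lemma drop_below_dual_space:
  assumes f: "f \<in> dual_space M"
  shows "(\<lambda>i. if i < n then 0 else f i) \<in> dual_space M"
proof (rule dual_spaceI)
  fix a assume fa: "fin_supp a" and Ma: "M a \<le> 1"
  have "\<bar>pairing (\<lambda>i. if i < n then 0 else f i) a\<bar> = \<bar>pairing f (\<lambda>i. if i < n then 0 else a i)\<bar>"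
    using pairing_drop_below[OF fa] by simp
  also have "\<dots> \<le> dual_norm M f * M (\<lambda>i. if i < n then 0 else a i)"
    by (rule pairing_le_dual_norm[OF f fin_supp_drop[OF fa]])
  also have "\<dots> \<le> dual_norm M f * C_tail"
    using drop_le[OF fa, of n] Ma C_tail_nonneg dual_norm_nonneg[OF f]
    by (intro mult_left_mono) (auto intro: order_trans mult_left_le)
  finally show "\<bar>pairing (\<lambda>i. if i < n then 0 else f i) a\<bar> \<le> dual_norm M f * C_tail" .
qed

text \<open>A compact diagonal operator is uniformly close on the unit ball to finitely many finitely
  supported vectors, which are annihilated by the tail projections far out; so its tails have
  small norm.\<close>

lemma Kdiag_drop_below_small:
  assumes fK: "f \<in> Kdiag M" and \<epsilon>: "\<epsilon> > 0"
  shows "\<exists>n0. \<forall>n\<ge>n0. dual_norm M (\<lambda>i. if i < n then 0 else f i) \<le> C_tail * \<epsilon>"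
proof -
  obtain F where fF: "finite F" and Fs: "\<forall>b\<in>F. fin_supp b"
    and net: "\<forall>a. fin_supp a \<and> M a \<le> 1 \<longrightarrow> (\<exists>b\<in>F. M (\<lambda>i. f i * a i - b i) < \<epsilon>)"
    using fK \<epsilon> unfolding Kdiag_def by blast
  obtain Lf where Lf: "\<And>b i. b \<in> F \<Longrightarrow> i \<ge> Lf b \<Longrightarrow> b i = 0"
    using Fs fin_supp_iff by metis
  have "dual_norm M (\<lambda>i. if i < n then 0 else f i) \<le> C_tail * \<epsilon>" if n: "n \<ge> (\<Sum>b\<in>F. Lf b)" for n
  proof (rule dual_norm_le)
    fix a assume fa: "fin_supp a" and Ma: "M a \<le> 1"
    obtain b where bF: "b \<in> F" and bM: "M (\<lambda>i. f i * a i - b i) < \<epsilon>" using net fa Ma by blast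
    have fd: "fin_supp (\<lambda>i. f i * a i - b i)"
      using Fs bF by (intro fin_supp_diff fin_supp_mult fa) auto
    have "Lf b \<le> (\<Sum>b\<in>F. Lf b)" using bF fF by (intro member_le_sum) auto
    then have "Lf b \<le> n" using n by linarith
    then have "(\<lambda>i. (if i < n then 0 else f i) * a i) = (\<lambda>i. if i < n then 0 else f i * a i - b i)"
      using Lf[OF bF] by (auto simp: fun_eq_iff)
    then have "\<bar>pairing (\<lambda>i. if i < n then 0 else f i) a\<bar> \<le> M (\<lambda>i. if i < n then 0 else f i * a i - b i)"
      using pairing_eq_pairing_one_mult[OF fa] summing_le[OF fin_supp_drop[OF fd]] by simp
    also have "\<dots> \<le> C_tail * M (\<lambda>i. f i * a i - b i)" by (rule drop_le[OF fd])
    also have "\<dots> \<le> C_tail * \<epsilon>" using bM C_tail_nonneg by (simp add: mult_left_mono)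
    finally show "\<bar>pairing (\<lambda>i. if i < n then 0 else f i) a\<bar> \<le> C_tail * \<epsilon>" .
  qed
  then show ?thesis by blast
qed

lemma Kdiag_subset_cspan_dual:
  assumes fK: "f \<in> Kdiag M"
  shows "f \<in> cspan_dual M"
proof -
  have fD: "f \<in> dual_space M"
    using fK Ldiag_subset_dual_space(1) unfolding Kdiag_def by blast
  have "(\<lambda>n. dual_norm M (\<lambda>i. if i < n then 0 else f i)) \<longlonglongrightarrow> 0"
  proof (intro LIMSEQ_I)
    fix r :: real assume r: "r > 0"
    define \<epsilon> where "\<epsilon> = r / (C_tail + 1)"
    have "\<epsilon> > 0" and small: "C_tail * \<epsilon> < r"
      using r C_tail_nonneg by (simp_all add: \<epsilon>_def field_simps)
    then obtain n0 where n0: "\<forall>n\<ge>n0. dual_norm M (\<lambda>i. if i < n then 0 else f i) \<le> C_tail * \<epsilon>"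
      using Kdiag_drop_below_small[OF fK] by blast
    show "\<exists>n0. \<forall>n\<ge>n0. norm (dual_norm M (\<lambda>i. if i < n then 0 else f i) - 0) < r"
    proof (intro exI allI impI)
      fix n assume "n \<ge> n0"
      then show "norm (dual_norm M (\<lambda>i. if i < n then 0 else f i) - 0) < r"
        using n0 small dual_norm_nonneg[OF drop_below_dual_space[OF fD]] by fastforce
    qed
  qed
  then show ?thesis using fD unfolding cspan_dual_def by blast
qed

end

lemma finite_grid_approximation:
  assumes \<delta>: "\<delta> > 0"
  obtains G where "finite G" "\<forall>b\<in>G. fin_supp b"
    "\<forall>H. (\<forall>i<n. \<bar>H i\<bar> \<le> B) \<longrightarrow> (\<exists>b\<in>G. l1 (\<lambda>i. (if i < n then H i else 0) - b i) \<le> real n * \<delta> / 2)"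
proof (intro that ballI allI impI)
  define Kb :: int where "Kb = \<lceil>B / \<delta>\<rceil> + 1"
  define grid where "grid xs = (\<lambda>i. if i < n then \<delta> * of_int (xs ! i) else 0)" for xs :: "int list"
  define G where "G = grid ` {xs. set xs \<subseteq> {-Kb..Kb} \<and> length xs = n}"
  show "finite G" unfolding G_def by (rule finite_imageI, rule finite_lists_length_eq) simp
  show "fin_supp b" if "b \<in> G" for b using that unfolding G_def grid_def by (auto intro: fin_supp_below)
  fix H :: "nat \<Rightarrow> real" assume HB: "\<forall>i<n. \<bar>H i\<bar> \<le> B"
  define xs where "xs = map (\<lambda>i. round (H i / \<delta>)) [0..<n]"
  have "set xs \<subseteq> {-Kb..Kb}"
  proof
    fix x assume "x \<in> set xs"
    then obtain i where "i < n" and x: "x = round (H i / \<delta>)" unfolding xs_def by auto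
    have "\<bar>H i / \<delta>\<bar> \<le> B / \<delta>" using HB \<open>i < n\<close> \<delta> by (simp add: abs_divide divide_right_mono)
    moreover have "\<bar>of_int x - H i / \<delta>\<bar> \<le> 1 / 2" unfolding x by (rule of_int_round_abs_le)
    ultimately have "\<bar>real_of_int x\<bar> \<le> real_of_int Kb"
      using le_of_int_ceiling[of "B / \<delta>"] unfolding Kb_def by linarith
    then show "x \<in> {-Kb..Kb}" by auto
  qed
  then have bG: "grid xs \<in> G" unfolding G_def by (simp add: xs_def)
  have "\<bar>H i - grid xs i\<bar> \<le> \<delta> / 2" if "i < n" for i
  proof -
    have "H i - grid xs i = - \<delta> * (of_int (round (H i / \<delta>)) - H i / \<delta>)"
      using that \<delta> by (simp add: grid_def xs_def field_simps)
    then have "\<bar>H i - grid xs i\<bar> = \<delta> * \<bar>of_int (round (H i / \<delta>)) - H i / \<delta>\<bar>"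
      using \<delta> by (simp add: abs_mult)
    also have "\<dots> \<le> \<delta> * (1 / 2)" using \<delta> of_int_round_abs_le by (intro mult_left_mono) auto
    finally show ?thesis by simp
  qed
  then have "(\<Sum>i<n. \<bar>H i - grid xs i\<bar>) \<le> (\<Sum>i<n. \<delta> / 2)"
    by (intro sum_mono) auto
  moreover have "l1 (\<lambda>i. (if i < n then H i else 0) - grid xs i) = (\<Sum>i<n. \<bar>H i - grid xs i\<bar>)"
    by (subst l1_eq_sum[of "{..<n}"]) (auto simp: grid_def)
  ultimately have "l1 (\<lambda>i. (if i < n then H i else 0) - grid xs i) \<le> real n * \<delta> / 2"
    by simp
  then show "\<exists>b\<in>G. l1 (\<lambda>i. (if i < n then H i else 0) - b i) \<le> real n * \<delta> / 2"
    using bG by blast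
qed

locale diag_multiplier_norm = summing_basis_norm +
  assumes multiplier_le:
    "f \<in> dual_space M \<Longrightarrow> fin_supp a \<Longrightarrow> M (\<lambda>i. f i * a i) \<le> 2 * dual_norm M f * M a"
begin

lemma dual_space_subset_Ldiag:
  assumes f: "f \<in> dual_space M"
  shows "f \<in> Ldiag M" "op_norm M f \<le> 2 * dual_norm M f"
proof -
  have *: "M (\<lambda>i. f i * a i) \<le> 2 * dual_norm M f" if fa: "fin_supp a" and Ma: "M a \<le> 1" for a
    using multiplier_le[OF f fa] mult_left_mono[OF Ma, of "2 * dual_norm M f"] dual_norm_nonneg[OF f]
    by simp
  show "f \<in> Ldiag M" "op_norm M f \<le> 2 * dual_norm M f"
    using LdiagI[OF *] op_norm_le[OF *] by blast+
qed

lemma Ldiag_eq_dual_space: "Ldiag M = dual_space M"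
  using Ldiag_subset_dual_space dual_space_subset_Ldiag by blast

lemma op_norm_equivalent_dual_norm:
  "\<exists>c d. 0 \<le> c \<and> 0 \<le> d \<and> c * d \<le> 2 \<and>
     (\<forall>lam\<in>Ldiag M. dual_norm M lam \<le> c * op_norm M lam \<and> op_norm M lam \<le> d * dual_norm M lam)"
  using Ldiag_subset_dual_space dual_space_subset_Ldiag by (intro exI[of _ 1] exI[of _ 2]) auto

text \<open>Conversely, an element of the closed span of \<open>(e\<^sub>i\<^sup>*)\<close> is, up to a small tail, a
  multiplier by finitely many coordinates, whose image of the unit ball is totally bounded.\<close>

lemma abs_mult_le_head_bound:
  assumes fa: "fin_supp a" and Ma: "M a \<le> 1" and "i < n"
  shows "\<bar>f i * a i\<bar> \<le> (\<Sum>i<n. \<bar>f i\<bar>) * C_coord"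
proof -
  have "\<bar>a i\<bar> \<le> C_coord"
    using coord_le[OF fa, of i] mult_left_le[OF Ma C_coord_nonneg] by linarith
  moreover have "\<bar>f i\<bar> \<le> (\<Sum>i<n. \<bar>f i\<bar>)" using \<open>i < n\<close> by (intro member_le_sum) auto
  ultimately show ?thesis unfolding abs_mult by (intro mult_mono) auto
qed

lemma finite_net_of_small_tail:
  assumes fD: "f \<in> dual_space M" and \<epsilon>: "\<epsilon> > 0"
    and tail_small: "2 * dual_norm M (\<lambda>i. if i < n then 0 else f i) \<le> \<epsilon> / 2"
  shows "\<exists>F. finite F \<and> (\<forall>b\<in>F. fin_supp b) \<and>
    (\<forall>a. fin_supp a \<and> M a \<le> 1 \<longrightarrow> (\<exists>b\<in>F. M (\<lambda>i. f i * a i - b i) < \<epsilon>))"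
proof -
  let ?g = "\<lambda>i. if i < n then 0 else f i"
  have gD: "?g \<in> dual_space M" by (rule drop_below_dual_space[OF fD])
  define B where "B = (\<Sum>i<n. \<bar>f i\<bar>) * C_coord"
  define \<delta> where "\<delta> = \<epsilon> / (2 * (real n + 1))"
  have \<delta>: "\<delta> > 0" using \<epsilon> by (simp add: \<delta>_def)
  have "real n * \<delta> < (2 * (real n + 1)) * \<delta>" using \<delta> by (intro mult_strict_right_mono) auto
  moreover have "(2 * (real n + 1)) * \<delta> = \<epsilon>" by (simp add: \<delta>_def)
  ultimately have grid_err: "real n * \<delta> / 2 < \<epsilon> / 2" by linarith
  obtain G where fG: "finite G" and Gs: "\<forall>b\<in>G. fin_supp b"
    and grid: "\<forall>H. (\<forall>i<n. \<bar>H i\<bar> \<le> B) \<longrightarrow>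
       (\<exists>b\<in>G. l1 (\<lambda>i. (if i < n then H i else 0) - b i) \<le> real n * \<delta> / 2)"
    by (rule finite_grid_approximation[OF \<delta>])
  have "\<exists>b\<in>G. M (\<lambda>i. f i * a i - b i) < \<epsilon>" if fa: "fin_supp a" and Ma: "M a \<le> 1" for a
  proof -
    have "\<forall>i<n. \<bar>f i * a i\<bar> \<le> B" unfolding B_def using abs_mult_le_head_bound[OF fa Ma] by blast
    then have "\<exists>b\<in>G. l1 (\<lambda>i. (if i < n then f i * a i else 0) - b i) \<le> real n * \<delta> / 2"
      using grid[rule_format, of "\<lambda>i. f i * a i"] by blast
    then obtain b where bG: "b \<in> G"
      and b: "l1 (\<lambda>i. (if i < n then f i * a i else 0) - b i) \<le> real n * \<delta> / 2"
      by blast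
    define h where "h = (\<lambda>i. (if i < n then f i * a i else 0) - b i)"
    have fh: "fin_supp h" unfolding h_def using Gs bG by (intro fin_supp_diff fin_supp_below) auto
    have "(\<lambda>i. f i * a i - b i) = (\<lambda>i. h i + ?g i * a i)" by (auto simp: h_def fun_eq_iff)
    then have "M (\<lambda>i. f i * a i - b i) \<le> M h + M (\<lambda>i. ?g i * a i)"
      using triangle[OF fh fin_supp_mult[OF fa]] by simp
    also have "M h < \<epsilon> / 2" using le_l1[OF fh] b grid_err unfolding h_def by linarith
    also have "M (\<lambda>i. ?g i * a i) \<le> \<epsilon> / 2"
      using multiplier_le[OF gD fa] tail_small mult_left_le[OF Ma, of "2 * dual_norm M ?g"]
        dual_norm_nonneg[OF gD] by linarith
    finally show ?thesis using bG by auto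
  qed
  then show ?thesis using fG Gs by blast
qed

lemma cspan_dual_subset_Kdiag:
  assumes fc: "f \<in> cspan_dual M"
  shows "f \<in> Kdiag M"
proof -
  have fD: "f \<in> dual_space M" and lim: "(\<lambda>n. dual_norm M (\<lambda>i. if i < n then 0 else f i)) \<longlonglongrightarrow> 0"
    using fc unfolding cspan_dual_def by auto
  have "\<exists>F. finite F \<and> (\<forall>b\<in>F. fin_supp b) \<and>
      (\<forall>a. fin_supp a \<and> M a \<le> 1 \<longrightarrow> (\<exists>b\<in>F. M (\<lambda>i. f i * a i - b i) < \<epsilon>))" if \<epsilon>: "\<epsilon> > 0" for \<epsilon>
  proof -
    have "\<epsilon> / 4 > 0" using \<epsilon> by simp
    from LIMSEQ_D[OF lim this] obtain n
      where n: "norm (dual_norm M (\<lambda>i. if i < n then 0 else f i) - 0) < \<epsilon> / 4"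
      by blast
    then have "2 * dual_norm M (\<lambda>i. if i < n then 0 else f i) \<le> \<epsilon> / 2" by simp
    then show ?thesis by (rule finite_net_of_small_tail[OF fD \<epsilon>])
  qed
  then show ?thesis using dual_space_subset_Ldiag(1)[OF fD] unfolding Kdiag_def by blast
qed

lemma Kdiag_eq_cspan_dual: "Kdiag M = cspan_dual M"
  using Kdiag_subset_cspan_dual cspan_dual_subset_Kdiag by blast

lemma RI_Kdiag_eq_R_one_cspan_dual: "RI_Kdiag M = R_one_cspan_dual M"
proof -
  have "lam \<in> RI_Kdiag M \<longleftrightarrow> (\<exists>c. (\<lambda>i. lam i - c) \<in> Kdiag M)" for lam
  proof
    assume "lam \<in> RI_Kdiag M"
    then obtain c \<mu> where "\<mu> \<in> Kdiag M" "lam = (\<lambda>i. c + \<mu> i)" unfolding RI_Kdiag_def by blast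
    then show "\<exists>c. (\<lambda>i. lam i - c) \<in> Kdiag M" by (intro exI[of _ c]) simp
  next
    assume "\<exists>c. (\<lambda>i. lam i - c) \<in> Kdiag M"
    then obtain c where "(\<lambda>i. lam i - c) \<in> Kdiag M" by blast
    then show "lam \<in> RI_Kdiag M" unfolding RI_Kdiag_def
      by (intro CollectI exI[of _ c] exI[of _ "\<lambda>i. lam i - c"]) auto
  qed
  then show ?thesis unfolding R_one_cspan_dual_def Kdiag_eq_cspan_dual by blast
qed

end

locale unconditional_norm =
  fixes N :: "(nat \<Rightarrow> real) \<Rightarrow> real"
  assumes unconditional: "normalized_1unc_basis_norm N"

sublocale unconditional_norm \<subseteq> X: fs_seminorm N
  using unconditional by unfold_locales (auto simp: normalized_1unc_basis_norm_def)

context unconditional_norm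
begin

lemma norm_unit_vec [simp]: "N (unit_vec j) = 1"
  using unconditional by (simp add: normalized_1unc_basis_norm_def)

lemma norm_sign_change:
  "fin_supp a \<Longrightarrow> (\<forall>i. \<epsilon> i = 1 \<or> \<epsilon> i = -1) \<Longrightarrow> N (\<lambda>i. \<epsilon> i * a i) = N a"
  using unconditional by (simp add: normalized_1unc_basis_norm_def)

lemma norm_le_sum_abs: "finite S \<Longrightarrow> (\<And>i. i \<notin> S \<Longrightarrow> x i = 0) \<Longrightarrow> N x \<le> (\<Sum>i\<in>S. \<bar>x i\<bar>)"
proof (induction S arbitrary: x rule: finite_induct)
  case empty
  then have "x = (\<lambda>i. 0)" by auto
  then show ?case by simp
next
  case (insert j S)
  define x' where "x' = (\<lambda>i. if i = j then 0 else x i)"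
  have fx': "fin_supp x'"
    using insert by (intro fin_supp_finite_set[of S]) (auto simp: x'_def)
  have "N x = N (\<lambda>i. x' i + x j * unit_vec j i)"
    by (rule arg_cong[of _ _ N]) (auto simp: x'_def unit_vec_def)
  also have "\<dots> \<le> N x' + \<bar>x j\<bar>"
    using X.triangle[OF fx', of "\<lambda>i. x j * unit_vec j i"] X.homogeneous[OF fin_supp_unit_vec, of "x j" j]
    by (simp add: fin_supp_mult)
  also have "N x' \<le> (\<Sum>i\<in>S. \<bar>x' i\<bar>)"
    by (rule insert.IH) (use insert.prems in \<open>auto simp: x'_def\<close>)
  also have "(\<Sum>i\<in>S. \<bar>x' i\<bar>) = (\<Sum>i\<in>S. \<bar>x i\<bar>)"
    using insert(2) by (intro sum.cong) (auto simp: x'_def)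
  finally show ?case using insert(1,2) by simp
qed

text \<open>The shrunk vector is a convex combination of \<open>y\<close> and its sign change at \<open>j\<close>.\<close>

lemma norm_shrink_coordinate:
  assumes fy: "fin_supp y" and le: "\<bar>t\<bar> \<le> \<bar>y j\<bar>"
  shows "N (y(j := t)) \<le> N y"
proof (cases "y j = 0")
  case True
  then have "y(j := t) = y" using le by auto
  then show ?thesis by simp
next
  case False
  define s where "s = (1 + t / y j) / 2"
  have "\<bar>t / y j\<bar> \<le> 1" using le False by (simp add: abs_divide divide_le_eq_1)
  then have s01: "0 \<le> s" "s \<le> 1" unfolding s_def using abs_le_D1 abs_le_D2 by fastforce+
  define z where "z = (\<lambda>i. (if i = j then -1 else 1) * y i)"
  have fz: "fin_supp z" unfolding z_def by (rule fin_supp_mult[OF fy])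
  have Nz: "N z = N y" unfolding z_def by (rule norm_sign_change[OF fy]) auto
  have "y(j := t) = (\<lambda>i. s * y i + (1 - s) * z i)"
    using False by (auto simp: z_def s_def field_simps)
  then have "N (y(j := t)) \<le> N (\<lambda>i. s * y i) + N (\<lambda>i. (1 - s) * z i)"
    using X.triangle[OF fin_supp_mult[OF fy] fin_supp_mult[OF fz]] by simp
  also have "\<dots> = s * N y + (1 - s) * N y"
    using X.homogeneous[OF fy, of s] X.homogeneous[OF fz, of "1 - s"] s01 Nz by simp
  also have "\<dots> = N y" by (simp add: algebra_simps)
  finally show ?thesis .
qed

lemma norm_mono:
  assumes fy: "fin_supp y" and le: "\<And>i. \<bar>x i\<bar> \<le> \<bar>y i\<bar>"
  shows "N x \<le> N y"
proof -
  have main: "\<forall>x. (\<forall>i. \<bar>x i\<bar> \<le> \<bar>y i\<bar>) \<longrightarrow> (\<forall>i. i \<notin> S \<longrightarrow> x i = y i) \<longrightarrow> N x \<le> N y"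
    if "finite S" for S
    using that
  proof (induction S rule: finite_induct)
    case (insert j S)
    show ?case
    proof (intro allI impI)
      fix x assume x_le: "\<forall>i. \<bar>x i\<bar> \<le> \<bar>y i\<bar>" and x_eq: "\<forall>i. i \<notin> insert j S \<longrightarrow> x i = y i"
      have "N x = N ((x(j := y j))(j := x j))" by simp
      also have "\<dots> \<le> N (x(j := y j))"
      proof (rule norm_shrink_coordinate)
        have "{i. (x(j := y j)) i \<noteq> 0} \<subseteq> {i. y i \<noteq> 0} \<union> {j}"
        proof
          fix i assume "i \<in> {i. (x(j := y j)) i \<noteq> 0}"
          then show "i \<in> {i. y i \<noteq> 0} \<union> {j}"
            using x_le[rule_format, of i] by (cases "i = j") auto
        qed
        moreover have "finite ({i. y i \<noteq> 0} \<union> {j})" using fy by (simp add: fin_supp_def)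
        ultimately show "fin_supp (x(j := y j))" unfolding fin_supp_def by (rule finite_subset)
      qed (use x_le in simp)
      also have "\<dots> \<le> N y" by (rule insert.IH[rule_format]) (use x_le x_eq in auto)
      finally show "N x \<le> N y" .
    qed
  next
    case empty
    show ?case
    proof (intro allI impI)
      fix x assume "\<forall>i. i \<notin> {} \<longrightarrow> x i = y i"
      then have "x = y" by auto
      then show "N x \<le> N y" by simp
    qed
  qed
  have "finite {i. y i \<noteq> 0}" using fy by (simp add: fin_supp_def)
  moreover have "x i = y i" if "i \<notin> {i. y i \<noteq> 0}" for i
    using that le[of i] by simp
  ultimately show ?thesis using le by (intro main[rule_format]) auto
qed

lemma norm_le_weighted:
  assumes fy: "fin_supp y" and W: "W \<ge> 0" and le: "\<And>i. \<bar>x i\<bar> \<le> W * \<bar>y i\<bar>"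
  shows "N x \<le> W * N y"
proof -
  have "N x \<le> N (\<lambda>i. W * y i)"
    by (rule norm_mono[OF fin_supp_mult[OF fy]]) (use le W in \<open>simp add: abs_mult\<close>)
  then show ?thesis using X.homogeneous[OF fy, of W] W by simp
qed

lemma norming_unit_bound:
  assumes "\<And>d. (\<And>i. i \<ge> L \<Longrightarrow> d i = 0) \<Longrightarrow> \<bar>pairing g d\<bar> \<le> N d" and "k < L"
  shows "\<bar>g k\<bar> \<le> 1"
proof -
  have "\<bar>pairing g (unit_vec k)\<bar> \<le> N (unit_vec k)"
    by (rule assms(1)) (use assms(2) in \<open>auto simp: unit_vec_def\<close>)
  then show ?thesis by simp
qed

end

subsection \<open>Admissible interval families\<close>

text \<open>An admissible list \<open>[(k\<^sub>1, m\<^sub>1), (k\<^sub>2, m\<^sub>2), \<dots>]\<close> is encoded by the set \<open>K\<close> of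
  left endpoints together with the map \<open>e\<close> sending \<open>k\<^sub>n\<close> to \<open>m\<^sub>n\<close>.\<close>

definition admissible :: "nat set \<Rightarrow> (nat \<Rightarrow> nat) \<Rightarrow> bool" where
  "admissible K e \<longleftrightarrow> finite K \<and> (\<forall>k\<in>K. k \<le> e k) \<and> (\<forall>k\<in>K. \<forall>k'\<in>K. k < k' \<longrightarrow> e k < k')"

definition block_sums :: "(nat \<Rightarrow> real) \<Rightarrow> nat set \<Rightarrow> (nat \<Rightarrow> nat) \<Rightarrow> nat \<Rightarrow> real" where
  "block_sums a K e = (\<lambda>j. if j \<in> K then (\<Sum>i=j..e j. a i) else 0)"

lemma adm_Cons_bounds: "adm ((k, m) # r) \<Longrightarrow> k \<le> m \<and> (\<forall>p\<in>set r. m < fst p \<and> fst p \<le> snd p)"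
proof (induction r arbitrary: k m)
  case Nil
  then show ?case by simp
next
  case (Cons p r)
  obtain k' m' where p: "p = (k', m')" by (cases p)
  have h: "k \<le> m" "m < k'" "adm ((k', m') # r)" using Cons(2) p by auto
  have "k' \<le> m' \<and> (\<forall>q\<in>set r. m' < fst q \<and> fst q \<le> snd q)" using Cons(1)[OF h(3)] .
  then show ?case using h p by force
qed

lemma adm_Cons_tail: "adm (p # r) \<Longrightarrow> adm r"
  by (cases p, cases r) auto

lemma adm_ConsI: "k \<le> m \<Longrightarrow> adm r \<Longrightarrow> (\<forall>p\<in>set r. m < fst p) \<Longrightarrow> adm ((k, m) # r)"
  by (cases r) auto

lemma jam_vec_Nil: "jam_vec a [] = (\<lambda>j. 0)"
  by (simp add: jam_vec_def)

lemma jam_vec_Cons: "jam_vec a ((k, m) # r) = (\<lambda>j. (if j = k then (\<Sum>i=k..m. a i) else 0) + jam_vec a r j)"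
  by (simp add: jam_vec_def)

lemma adm_imp_admissible:
  "adm I \<Longrightarrow> \<exists>K e. admissible K e \<and> K = fst ` set I \<and> (\<forall>p\<in>set I. e (fst p) = snd p) \<and> (\<forall>a. jam_vec a I = block_sums a K e)"
proof (induction I)
  case Nil
  then show ?case by (intro exI[of _ "{}"]) (auto simp: admissible_def jam_vec_Nil block_sums_def)
next
  case (Cons p r)
  obtain k m where p: "p = (k, m)" by (cases p)
  have ar: "adm r" using Cons(2) adm_Cons_tail by blast
  have first: "k \<le> m" "\<forall>q\<in>set r. m < fst q \<and> fst q \<le> snd q" using adm_Cons_bounds Cons(2) p by blast+
  obtain K e where v: "admissible K e" and K: "K = fst ` set r" and e: "\<forall>q\<in>set r. e (fst q) = snd q"
    and j: "\<forall>a. jam_vec a r = block_sums a K e"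
    using Cons(1)[OF ar] by blast
  have kK: "k \<notin> K" using K first by force
  have gt: "\<forall>k'\<in>K. m < k'" using K first by force
  define e' where "e' = e(k := m)"
  show ?case
  proof (intro exI conjI allI ballI)
    show "admissible (insert k K) e'"
      unfolding admissible_def
    proof (intro conjI ballI impI)
      show "finite (insert k K)" using v admissible_def by auto
      fix x assume x: "x \<in> insert k K"
      show "x \<le> e' x" using x v first(1) kK unfolding admissible_def e'_def by auto
      fix y assume y: "y \<in> insert k K" and xy: "x < y"
      show "e' x < y"
      proof (cases "x = k")
        case True
        then have "y \<in> K" using y xy by auto
        then show ?thesis using True gt by (simp add: e'_def)
      next
        case False
        then have xK: "x \<in> K" using x by auto
        have "y \<noteq> k" using gt xK xy first(1) by force
        then have "y \<in> K" using y by auto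
        then show ?thesis using v xK xy False unfolding admissible_def e'_def by auto
      qed
    qed
    show "insert k K = fst ` set (p # r)" using K p by auto
    show "e' (fst q) = snd q" if "q \<in> set (p # r)" for q
      using that e p kK K unfolding e'_def by (auto)
    fix a
    show "jam_vec a (p # r) = block_sums a (insert k K) e'"
      unfolding p jam_vec_Cons using kK by (auto simp: fun_eq_iff j[rule_format] block_sums_def e'_def)
  qed
qed

lemma adm_map_sorted:
  "sorted_wrt (<) xs \<Longrightarrow> (\<forall>k\<in>set xs. k \<le> e k) \<Longrightarrow> (\<forall>k\<in>set xs. \<forall>k'\<in>set xs. k < k' \<longrightarrow> e k < k')
   \<Longrightarrow> adm (map (\<lambda>k. (k, e k)) xs) \<and> (\<forall>a. jam_vec a (map (\<lambda>k. (k, e k)) xs) = block_sums a (set xs) e)"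
proof (induction xs)
  case Nil
  then show ?case by (simp add: jam_vec_Nil block_sums_def)
next
  case (Cons x xs)
  have IH: "adm (map (\<lambda>k. (k, e k)) xs) \<and> (\<forall>a. jam_vec a (map (\<lambda>k. (k, e k)) xs) = block_sums a (set xs) e)"
    using Cons by auto
  have xn: "x \<notin> set xs" using Cons(2) by auto
  have "adm ((x, e x) # map (\<lambda>k. (k, e k)) xs)"
    by (rule adm_ConsI) (use Cons(2-4) IH in auto)
  moreover have "jam_vec a ((x, e x) # map (\<lambda>k. (k, e k)) xs) = block_sums a (set (x # xs)) e" for a
    unfolding jam_vec_Cons using IH xn by (auto simp: block_sums_def fun_eq_iff)
  ultimately show ?case by simp
qed

lemma admissible_imp_adm: "admissible K e \<Longrightarrow> \<exists>I. adm I \<and> (\<forall>a. jam_vec a I = block_sums a K e)"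
proof -
  assume v: "admissible K e"
  let ?xs = "sorted_list_of_set K"
  have fK: "finite K" using v admissible_def by blast
  have "adm (map (\<lambda>k. (k, e k)) ?xs) \<and> (\<forall>a. jam_vec a (map (\<lambda>k. (k, e k)) ?xs) = block_sums a (set ?xs) e)"
    by (rule adm_map_sorted) (use v fK in \<open>auto simp: admissible_def\<close>)
  then show ?thesis using fK by auto
qed

lemma Jnorm_set_eq: "{N (jam_vec a I) | I. adm I} = {N (block_sums a K e) | K e. admissible K e}"
proof
  show "{N (jam_vec a I) |I. adm I} \<subseteq> {N (block_sums a K e) |K e. admissible K e}"
    using adm_imp_admissible by fastforce
  show "{N (block_sums a K e) |K e. admissible K e} \<subseteq> {N (jam_vec a I) |I. adm I}"
  proof
    fix x assume "x \<in> {N (block_sums a K e) |K e. admissible K e}"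
    then obtain K e where v: "admissible K e" and x: "x = N (block_sums a K e)" by blast
    obtain I where I: "adm I" "\<forall>a. jam_vec a I = block_sums a K e" using admissible_imp_adm[OF v] by blast
    then have "x = N (jam_vec a I)" using x by simp
    then show "x \<in> {N (jam_vec a I) |I. adm I}" using I(1) by blast
  qed
qed

lemma Jnorm_eq_Sup_admissible: "Jnorm N a = Sup {N (block_sums a K e) | K e. admissible K e}"
  unfolding Jnorm_def Jnorm_set_eq ..

lemma admissible_empty: "admissible {} e" by (simp add: admissible_def)

lemma block_sums_empty: "block_sums a {} e = (\<lambda>j. 0)" by (simp add: block_sums_def)

lemma admissible_finite: "admissible K e \<Longrightarrow> finite K" by (simp add: admissible_def)

lemma fin_supp_block_sums: "admissible K e \<Longrightarrow> fin_supp (block_sums a K e)"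
  by (rule fin_supp_finite_set[of K]) (auto simp: admissible_def block_sums_def)

lemma block_sums_add: "block_sums (\<lambda>i. a i + b i) K e = (\<lambda>j. block_sums a K e j + block_sums b K e j)"
  by (auto simp: block_sums_def sum.distrib)

lemma block_sums_scale: "block_sums (\<lambda>i. c * a i) K e = (\<lambda>j. c * block_sums a K e j)"
  by (auto simp: block_sums_def sum_distrib_left)

lemma admissible_same_block: "admissible K e \<Longrightarrow> k \<in> K \<Longrightarrow> k' \<in> K \<Longrightarrow> k \<le> i \<Longrightarrow> i \<le> e k \<Longrightarrow> k' \<le> i \<Longrightarrow> i \<le> e k' \<Longrightarrow> k = k'"
  unfolding admissible_def by (metis leD le_trans linorder_neqE_nat)

lemma admissible_disjoint: "admissible K e \<Longrightarrow> k \<in> K \<Longrightarrow> k' \<in> K \<Longrightarrow> k \<noteq> k' \<Longrightarrow> {k..e k} \<inter> {k'..e k'} = {}"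
  using admissible_same_block[of K e k k'] by fastforce

lemma sum_abs_block_sums_le_l1:
  assumes v: "admissible K e" and fa: "fin_supp a"
  shows "(\<Sum>k\<in>K. \<bar>\<Sum>i=k..e k. a i\<bar>) \<le> l1 a"
proof -
  have fK: "finite K" using v admissible_def by blast
  let ?U = "\<Union>k\<in>K. {k..e k}"
  let ?S = "{i. a i \<noteq> 0}"
  have fS: "finite ?S" using fa fin_supp_def by blast
  have fU: "finite ?U" using fK by auto
  have "(\<Sum>k\<in>K. \<bar>\<Sum>i=k..e k. a i\<bar>) \<le> (\<Sum>k\<in>K. \<Sum>i=k..e k. \<bar>a i\<bar>)"
    by (intro sum_mono sum_abs)
  also have "\<dots> = (\<Sum>i\<in>?U. \<bar>a i\<bar>)"
    by (rule sum.UNION_disjoint[symmetric]) (use fK admissible_disjoint[OF v] in auto)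
  also have "\<dots> = (\<Sum>i\<in>?U \<inter> ?S. \<bar>a i\<bar>)"
    by (rule sum.mono_neutral_right) (use fU in auto)
  also have "\<dots> \<le> (\<Sum>i\<in>?S. \<bar>a i\<bar>)"
    by (rule sum_mono2) (use fS in auto)
  finally show ?thesis unfolding l1_def .
qed

context unconditional_norm
begin

lemma norm_block_sums_le_l1: "admissible K e \<Longrightarrow> fin_supp a \<Longrightarrow> N (block_sums a K e) \<le> l1 a"
proof -
  assume v: "admissible K e" and fa: "fin_supp a"
  have "N (block_sums a K e) \<le> (\<Sum>k\<in>K. \<bar>block_sums a K e k\<bar>)"
    by (rule norm_le_sum_abs) (use v in \<open>auto simp: admissible_def block_sums_def\<close>)
  also have "\<dots> = (\<Sum>k\<in>K. \<bar>\<Sum>i=k..e k. a i\<bar>)" by (simp add: block_sums_def)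
  also have "\<dots> \<le> l1 a" by (rule sum_abs_block_sums_le_l1[OF v fa])
  finally show ?thesis .
qed

lemma Jnorm_set_bdd: "fin_supp a \<Longrightarrow> bdd_above {N (block_sums a K e) | K e. admissible K e}"
  unfolding bdd_above_def using norm_block_sums_le_l1 by blast

lemma Jnorm_set_nonempty: "{N (block_sums a K e) | K e. admissible K e} \<noteq> {}"
  using admissible_empty by blast

lemma norm_block_sums_le_Jnorm: "admissible K e \<Longrightarrow> fin_supp a \<Longrightarrow> N (block_sums a K e) \<le> Jnorm N a"
  unfolding Jnorm_eq_Sup_admissible by (rule cSup_upper) (auto intro: Jnorm_set_bdd)

lemma Jnorm_leI: "(\<And>K e. admissible K e \<Longrightarrow> N (block_sums a K e) \<le> B) \<Longrightarrow> Jnorm N a \<le> B"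
  unfolding Jnorm_eq_Sup_admissible by (rule cSup_least[OF Jnorm_set_nonempty]) auto

lemma Jnorm_le_l1: "fin_supp a \<Longrightarrow> Jnorm N a \<le> l1 a"
  by (rule Jnorm_leI) (rule norm_block_sums_le_l1)

lemma Jnorm_nonneg: "fin_supp a \<Longrightarrow> Jnorm N a \<ge> 0"
  using norm_block_sums_le_Jnorm[OF admissible_empty, of a] X.zero by (simp add: block_sums_empty)

lemma abs_interval_sum_le_Jnorm: "fin_supp a \<Longrightarrow> k \<le> m \<Longrightarrow> \<bar>\<Sum>i=k..m. a i\<bar> \<le> Jnorm N a"
proof -
  assume fa: "fin_supp a" and km: "k \<le> m"
  have v: "admissible {k} (\<lambda>_. m)" using km by (simp add: admissible_def)
  have "block_sums a {k} (\<lambda>_. m) = (\<lambda>j. (\<Sum>i=k..m. a i) * unit_vec k j)"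
    by (auto simp: block_sums_def unit_vec_def)
  then have "N (block_sums a {k} (\<lambda>_. m)) = \<bar>\<Sum>i=k..m. a i\<bar>"
    using X.homogeneous[OF fin_supp_unit_vec, of "\<Sum>i=k..m. a i" k] norm_unit_vec by (simp add: mult.commute)
  then show ?thesis using norm_block_sums_le_Jnorm[OF v fa] by simp
qed

lemma abs_le_Jnorm: "fin_supp a \<Longrightarrow> \<bar>a j\<bar> \<le> Jnorm N a"
  using abs_interval_sum_le_Jnorm[of a j j] by simp

lemma abs_sum_le_Jnorm: "fin_supp a \<Longrightarrow> \<bar>pairing (\<lambda>_. 1) a\<bar> \<le> Jnorm N a"
proof -
  assume fa: "fin_supp a"
  obtain L where L: "L \<ge> 1" "\<And>i. i \<ge> L \<Longrightarrow> a i = 0" using fin_suppE[OF fa, of 1] by blast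
  have "pairing (\<lambda>_. 1) a = (\<Sum>i<L. a i)" using pairing_lessThan[of L a] L by simp
  also have "\<dots> = (\<Sum>i=0..L-1. a i)" using L by (intro sum.cong) auto
  finally show ?thesis using abs_interval_sum_le_Jnorm[OF fa, of 0 "L - 1"] by simp
qed

lemma Jnorm_triangle: "fin_supp a \<Longrightarrow> fin_supp b \<Longrightarrow> Jnorm N (\<lambda>i. a i + b i) \<le> Jnorm N a + Jnorm N b"
proof (rule Jnorm_leI)
  fix K e assume fa: "fin_supp a" and fb: "fin_supp b" and v: "admissible K e"
  have "N (block_sums (\<lambda>i. a i + b i) K e) \<le> N (block_sums a K e) + N (block_sums b K e)"
    unfolding block_sums_add by (rule X.triangle[OF fin_supp_block_sums[OF v] fin_supp_block_sums[OF v]])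
  also have "\<dots> \<le> Jnorm N a + Jnorm N b" using norm_block_sums_le_Jnorm[OF v fa] norm_block_sums_le_Jnorm[OF v fb] by simp
  finally show "N (block_sums (\<lambda>i. a i + b i) K e) \<le> Jnorm N a + Jnorm N b" .
qed

lemma Jnorm_homogeneous_le: "fin_supp a \<Longrightarrow> Jnorm N (\<lambda>i. c * a i) \<le> \<bar>c\<bar> * Jnorm N a"
proof (rule Jnorm_leI)
  fix K e assume fa: "fin_supp a" and v: "admissible K e"
  have "N (block_sums (\<lambda>i. c * a i) K e) = \<bar>c\<bar> * N (block_sums a K e)"
    unfolding block_sums_scale by (rule X.homogeneous[OF fin_supp_block_sums[OF v]])
  also have "\<dots> \<le> \<bar>c\<bar> * Jnorm N a" using norm_block_sums_le_Jnorm[OF v fa] by (simp add: mult_left_mono)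
  finally show "N (block_sums (\<lambda>i. c * a i) K e) \<le> \<bar>c\<bar> * Jnorm N a" .
qed

lemma Jnorm_homogeneous: "fin_supp a \<Longrightarrow> Jnorm N (\<lambda>i. c * a i) = \<bar>c\<bar> * Jnorm N a"
proof (cases "c = 0")
  case True
  assume fa: "fin_supp a"
  have "Jnorm N (\<lambda>i. 0) = 0"
    using Jnorm_homogeneous_le[OF fin_supp_zero, of 0] Jnorm_nonneg[OF fin_supp_zero] by simp
  then show ?thesis using True by simp
next
  case False
  assume fa: "fin_supp a"
  have "Jnorm N a = Jnorm N (\<lambda>i. (1 / c) * (c * a i))" using False by simp
  also have "\<dots> \<le> \<bar>1 / c\<bar> * Jnorm N (\<lambda>i. c * a i)"
    by (rule Jnorm_homogeneous_le[OF fin_supp_mult[OF fa]])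
  finally have "\<bar>c\<bar> * Jnorm N a \<le> Jnorm N (\<lambda>i. c * a i)"
    using False by (simp add: abs_divide field_simps)
  then show ?thesis using Jnorm_homogeneous_le[OF fa, of c] by simp
qed

end

sublocale unconditional_norm \<subseteq> J: fs_seminorm "Jnorm N"
  by unfold_locales (auto intro: Jnorm_triangle simp: Jnorm_homogeneous)

context unconditional_norm
begin

lemma Jnorm_unit_vec_le: "Jnorm N (unit_vec j) \<le> 1"
proof -
  have "l1 (unit_vec j) = 1"
  proof -
    have "{i. unit_vec j i \<noteq> 0} = {j}" by (auto simp: unit_vec_def)
    then show ?thesis by (simp add: l1_def unit_vec_def)
  qed
  then show ?thesis using Jnorm_le_l1[of "unit_vec j"] by simp
qed

lemma Jnorm_restrict_below_le: "fin_supp a \<Longrightarrow> Jnorm N (\<lambda>i. if i < n then a i else 0) \<le> Jnorm N a"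
proof (rule Jnorm_leI)
  fix K e assume fa: "fin_supp a" and v: "admissible K e"
  define K' where "K' = {k \<in> K. k < n}"
  define e' where "e' = (\<lambda>k. min (e k) (n - 1))"
  have v': "admissible K' e'" using v unfolding admissible_def K'_def e'_def by (auto intro: min.strict_coboundedI1)
  have "block_sums (\<lambda>i. if i < n then a i else 0) K e = block_sums a K' e'"
  proof
    fix j
    show "block_sums (\<lambda>i. if i < n then a i else 0) K e j = block_sums a K' e' j"
    proof (cases "j \<in> K \<and> j < n")
      case True
      have "(\<Sum>i=j..e j. if i < n then a i else 0) = (\<Sum>i\<in>{j..e j} \<inter> {i. i < n}. a i)"
        by (simp add: sum.inter_restrict)
      also have "{j..e j} \<inter> {i. i < n} = {j..min (e j) (n - 1)}" using True by auto
      finally show ?thesis using True by (simp add: block_sums_def K'_def e'_def)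
    next
      case False
      then show ?thesis by (auto simp: block_sums_def K'_def intro!: sum.neutral)
    qed
  qed
  then show "N (block_sums (\<lambda>i. if i < n then a i else 0) K e) \<le> Jnorm N a"
    using norm_block_sums_le_Jnorm[OF v' fa] by simp
qed

lemma Jnorm_drop_below_le: "fin_supp a \<Longrightarrow> Jnorm N (\<lambda>i. if i < n then 0 else a i) \<le> 2 * Jnorm N a"
proof -
  assume fa: "fin_supp a"
  have "(\<lambda>i. if i < n then 0 else a i) = (\<lambda>i. a i - (if i < n then a i else 0))" by auto
  then have "Jnorm N (\<lambda>i. if i < n then 0 else a i) \<le> Jnorm N a + Jnorm N (\<lambda>i. if i < n then a i else 0)"
    using J.diff[OF fa fin_supp_restrict[OF fa]] by simp
  then show ?thesis using Jnorm_restrict_below_le[OF fa, of n] by simp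
qed

end

sublocale unconditional_norm \<subseteq> J: summing_basis_norm "Jnorm N" 1 2
  by unfold_locales (auto intro: Jnorm_le_l1 abs_sum_le_Jnorm Jnorm_drop_below_le abs_le_Jnorm)

subsection \<open>Multipliers on \<open>J(X)\<close>\<close>

definition block_weight :: "(nat \<Rightarrow> real) \<Rightarrow> nat set \<Rightarrow> (nat \<Rightarrow> nat) \<Rightarrow> nat \<Rightarrow> real" where
  "block_weight g K e i = (\<Sum>k\<in>K. if k \<le> i \<and> i \<le> e k then g k else 0)"

lemma block_weight_filter:
  assumes "finite K"
  shows "block_weight g {k\<in>K. P k} e i = (\<Sum>k\<in>K. if P k \<and> k \<le> i \<and> i \<le> e k then g k else 0)"
  unfolding block_weight_def sum.inter_filter[OF assms] by (rule sum.cong) auto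

lemma block_weight_split:
  assumes "finite K"
  shows "block_weight g K e i = block_weight g {k\<in>K. q \<le> k} e i + block_weight g {k\<in>K. k < q} e i"
proof -
  have "(\<Sum>k\<in>K. if k \<le> i \<and> i \<le> e k then g k else 0) =
      (\<Sum>k\<in>K. (if q \<le> k \<and> k \<le> i \<and> i \<le> e k then g k else 0)
        + (if k < q \<and> k \<le> i \<and> i \<le> e k then g k else 0))"
    by (rule sum.cong) auto
  then show ?thesis unfolding block_weight_filter[OF assms] sum.distrib by (simp add: block_weight_def)
qed

definition block_owner :: "nat set \<Rightarrow> (nat \<Rightarrow> nat) \<Rightarrow> nat \<Rightarrow> nat" where
  "block_owner Q r k = (THE q. q \<in> Q \<and> q \<le> k \<and> k \<le> r q)"

lemma block_owner_eq: "admissible Q r \<Longrightarrow> q \<in> Q \<Longrightarrow> q \<le> k \<Longrightarrow> k \<le> r q \<Longrightarrow> block_owner Q r k = q"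
  unfolding block_owner_def by (rule the_equality) (auto dest: admissible_same_block)

lemma sum_interval_restrict:
  fixes a :: "nat \<Rightarrow> real"
  shows "(\<Sum>i=q..R. if k \<le> i \<and> i \<le> E then a i else 0) = (\<Sum>i=max q k..min R E. a i)"
proof -
  have "(\<Sum>i=q..R. if k \<le> i \<and> i \<le> E then a i else 0) = (\<Sum>i\<in>{q..R} \<inter> {i. k \<le> i \<and> i \<le> E}. a i)"
    unfolding sum.inter_restrict[OF finite_atLeastAtMost] by simp
  also have "{q..R} \<inter> {i. k \<le> i \<and> i \<le> E} = {max q k..min R E}" by auto
  finally show ?thesis .
qed

lemma sum_mult_sum_if_swap:
  fixes a g :: "nat \<Rightarrow> real"
  assumes "finite I" "finite K"
  shows "(\<Sum>i\<in>I. a i * (\<Sum>k\<in>K. if P k i then g k else 0)) = (\<Sum>k\<in>K. g k * (\<Sum>i\<in>I. if P k i then a i else 0))"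
proof -
  have "(\<Sum>i\<in>I. a i * (\<Sum>k\<in>K. if P k i then g k else 0)) = (\<Sum>i\<in>I. \<Sum>k\<in>K. if P k i then g k * a i else 0)"
    by (auto simp: sum_distrib_left intro!: sum.cong)
  also have "\<dots> = (\<Sum>k\<in>K. \<Sum>i\<in>I. if P k i then g k * a i else 0)" by (rule sum.swap)
  also have "\<dots> = (\<Sum>k\<in>K. g k * (\<Sum>i\<in>I. if P k i then a i else 0))"
    by (auto simp: sum_distrib_left intro!: sum.cong)
  finally show ?thesis .
qed

lemma sum_mult_block_weight_filter:
  fixes a g :: "nat \<Rightarrow> real"
  assumes fK: "finite K"
  shows "(\<Sum>i=q..R. a i * block_weight g {k\<in>K. P k} e i)
    = (\<Sum>k\<in>K. if P k then g k * (\<Sum>i=max q k..min R (e k). a i) else 0)"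
proof -
  have "(\<Sum>i=q..R. a i * block_weight g {k\<in>K. P k} e i)
      = (\<Sum>k\<in>K. g k * (\<Sum>i=q..R. if P k \<and> k \<le> i \<and> i \<le> e k then a i else 0))"
    unfolding block_weight_filter[OF fK] by (rule sum_mult_sum_if_swap) (use fK in auto)
  also have "\<dots> = (\<Sum>k\<in>K. if P k then g k * (\<Sum>i=max q k..min R (e k). a i) else 0)"
    by (rule sum.cong) (auto simp: sum_interval_restrict[symmetric])
  finally show ?thesis .
qed

lemma pairing_mult_block_weight:
  assumes fa: "fin_supp a" and v: "admissible K e"
  shows "pairing f (\<lambda>i. a i * block_weight g K e i) = pairing g (block_sums (\<lambda>i. f i * a i) K e)"
proof -
  have fK: "finite K" using v admissible_finite by blast
  obtain L where L: "L \<ge> Suc (\<Sum>k\<in>K. e k)" "\<And>i. i \<ge> L \<Longrightarrow> a i = 0"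
    using fin_suppE[OF fa, of "Suc (\<Sum>k\<in>K. e k)"] by blast
  have eL: "e k < L" if "k \<in> K" for k
  proof -
    have "e k \<le> (\<Sum>k\<in>K. e k)" using that fK by (intro member_le_sum) auto
    then show ?thesis using L(1) by linarith
  qed
  have "pairing f (\<lambda>i. a i * block_weight g K e i) = (\<Sum>i<L. f i * (a i * block_weight g K e i))"
    by (rule pairing_lessThan) (simp add: L(2))
  also have "\<dots> = (\<Sum>i<L. (f i * a i) * block_weight g K e i)" by (simp add: mult.assoc)
  also have "\<dots> = (\<Sum>k\<in>K. g k * (\<Sum>i<L. if k \<le> i \<and> i \<le> e k then f i * a i else 0))"
    unfolding block_weight_def by (rule sum_mult_sum_if_swap) (use fK in auto)
  also have "\<dots> = (\<Sum>k\<in>K. g k * block_sums (\<lambda>i. f i * a i) K e k)"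
  proof (rule sum.cong[OF refl])
    fix k assume kK: "k \<in> K"
    have "(\<Sum>i<L. if k \<le> i \<and> i \<le> e k then f i * a i else 0) = (\<Sum>i\<in>{..<L} \<inter> {i. k \<le> i \<and> i \<le> e k}. f i * a i)"
      unfolding sum.inter_restrict[OF finite_lessThan] by simp
    also have "{..<L} \<inter> {i. k \<le> i \<and> i \<le> e k} = {k..e k}" using eL[OF kK] by auto
    finally show "g k * (\<Sum>i<L. if k \<le> i \<and> i \<le> e k then f i * a i else 0) = g k * block_sums (\<lambda>i. f i * a i) K e k"
      using kK by (simp add: block_sums_def)
  qed
  also have "\<dots> = pairing g (block_sums (\<lambda>i. f i * a i) K e)"
    by (rule pairing_eq_sum[OF fK, symmetric]) (auto simp: block_sums_def)
  finally show ?thesis .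
qed

lemma straddling_blocks_eq:
  fixes a g :: "nat \<Rightarrow> real" and q R :: nat
  assumes v: "admissible K e"
  defines "p \<equiv> block_owner K e q"
  shows "(\<Sum>i=q..R. a i * block_weight g {k\<in>K. k < q} e i)
    = (if p \<in> K \<and> p < q \<and> q \<le> e p then g p * (\<Sum>i=q..min R (e p). a i) else 0)"
proof -
  have fK: "finite K" using v admissible_finite by blast
  have "(\<Sum>i=q..R. a i * block_weight g {k\<in>K. k < q} e i)
      = (\<Sum>k\<in>K. if k < q then g k * (\<Sum>i=max q k..min R (e k). a i) else 0)"
    by (rule sum_mult_block_weight_filter[OF fK])
  also have "\<dots> = (\<Sum>k\<in>K. if p = k then (if p \<in> K \<and> p < q \<and> q \<le> e p
      then g p * (\<Sum>i=q..min R (e p). a i) else 0) else 0)"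
  proof (rule sum.cong[OF refl])
    fix k assume kK: "k \<in> K"
    show "(if k < q then g k * (\<Sum>i=max q k..min R (e k). a i) else 0)
       = (if p = k then (if p \<in> K \<and> p < q \<and> q \<le> e p
           then g p * (\<Sum>i=q..min R (e p). a i) else 0) else 0)"
    proof (cases "k < q \<and> q \<le> e k")
      case True
      then have "p = k" unfolding p_def using block_owner_eq[OF v kK] by simp
      then show ?thesis using kK True by (simp add: max_def)
    next
      case False
      then show ?thesis by (auto simp: max_def)
    qed
  qed
  also have "\<dots> = (if p \<in> K \<and> p < q \<and> q \<le> e p then g p * (\<Sum>i=q..min R (e p). a i) else 0)"
    using fK by simp
  finally show ?thesis .
qed

text \<open>The blocks of \<open>K\<close> starting inside some test interval \<open>[q, r q]\<close>, cut off at its end.\<close>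

definition owned_blocks :: "nat set \<Rightarrow> nat set \<Rightarrow> (nat \<Rightarrow> nat) \<Rightarrow> nat set" where
  "owned_blocks K Q r = {k \<in> K. block_owner Q r k \<in> Q \<and> block_owner Q r k \<le> k \<and> k \<le> r (block_owner Q r k)}"

definition trimmed_ends :: "(nat \<Rightarrow> nat) \<Rightarrow> nat set \<Rightarrow> (nat \<Rightarrow> nat) \<Rightarrow> nat \<Rightarrow> nat" where
  "trimmed_ends e Q r = (\<lambda>k. min (e k) (r (block_owner Q r k)))"

lemma admissible_owned_blocks:
  "admissible K e \<Longrightarrow> admissible (owned_blocks K Q r) (trimmed_ends e Q r)"
  unfolding admissible_def owned_blocks_def trimmed_ends_def by (auto intro: min.coboundedI1 le_less_trans)

lemma head_blocks_eq:
  fixes a g :: "nat \<Rightarrow> real"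
  assumes fK: "finite K" and vQ: "admissible Q r"
  shows "(if q \<in> Q then \<Sum>i=q..r q. a i * block_weight g {k\<in>K. q \<le> k} e i else 0)
    = (\<Sum>k\<in>K. if k \<in> owned_blocks K Q r \<and> block_owner Q r k = q
        then g k * block_sums a (owned_blocks K Q r) (trimmed_ends e Q r) k else 0)"
proof (cases "q \<in> Q")
  case False
  have "(\<Sum>k\<in>K. if k \<in> owned_blocks K Q r \<and> block_owner Q r k = q
        then g k * block_sums a (owned_blocks K Q r) (trimmed_ends e Q r) k else 0) = 0"
    using False by (intro sum.neutral) (auto simp: owned_blocks_def)
  then show ?thesis using False by simp
next
  case True
  have "(\<Sum>i=q..r q. a i * block_weight g {k\<in>K. q \<le> k} e i)
      = (\<Sum>k\<in>K. if q \<le> k then g k * (\<Sum>i=max q k..min (r q) (e k). a i) else 0)"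
    by (rule sum_mult_block_weight_filter[OF fK])
  also have "\<dots> = (\<Sum>k\<in>K. if k \<in> owned_blocks K Q r \<and> block_owner Q r k = q
        then g k * block_sums a (owned_blocks K Q r) (trimmed_ends e Q r) k else 0)"
  proof (rule sum.cong[OF refl])
    fix k assume kK: "k \<in> K"
    show "(if q \<le> k then g k * (\<Sum>i=max q k..min (r q) (e k). a i) else 0)
        = (if k \<in> owned_blocks K Q r \<and> block_owner Q r k = q
            then g k * block_sums a (owned_blocks K Q r) (trimmed_ends e Q r) k else 0)"
    proof (cases "q \<le> k \<and> k \<le> r q")
      case in_q: True
      then have "block_owner Q r k = q" using block_owner_eq[OF vQ True] by simp
      then show ?thesis using kK in_q True
        by (simp add: owned_blocks_def block_sums_def trimmed_ends_def min.commute)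
    next
      case False
      then have "\<not> (k \<in> owned_blocks K Q r \<and> block_owner Q r k = q)" by (auto simp: owned_blocks_def)
      then show ?thesis using False by auto
    qed
  qed
  finally show ?thesis using True by simp
qed

context unconditional_norm
begin

text \<open>Blocks of \<open>K\<close> that start before the test interval \<open>[q, r q]\<close>: at most one of them,
  the one containing \<open>q\<close>, meets it, in a subinterval.\<close>

lemma norm_straddling_blocks_le:
  assumes fa: "fin_supp a" and v: "admissible K e" and vQ: "admissible Q r"
    and gb: "\<And>k. k \<in> K \<Longrightarrow> \<bar>g k\<bar> \<le> 1"
  shows "N (\<lambda>q. if q \<in> Q then \<Sum>i=q..r q. a i * block_weight g {k\<in>K. k < q} e i else 0) \<le> Jnorm N a"
    (is "N ?Y \<le> _")
proof -
  have fK: "finite K" using v admissible_finite by blast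
  define own where "own = block_owner K e"
  define cond where "cond = (\<lambda>q. own q \<in> K \<and> own q < q \<and> q \<le> e (own q))"
  define Q' where "Q' = {q \<in> Q. cond q}"
  define r' where "r' = (\<lambda>q. min (r q) (e (own q)))"
  have vQ': "admissible Q' r'"
    using vQ unfolding admissible_def Q'_def r'_def cond_def
    by (auto intro: min.coboundedI1 le_less_trans)
  have Yq: "?Y q = (if q \<in> Q \<and> cond q then g (own q) * (\<Sum>i=q..min (r q) (e (own q)). a i) else 0)" for q
    using straddling_blocks_eq[OF v, of a g q "r q"] by (simp add: own_def cond_def)
  have "N ?Y \<le> N (block_sums a Q' r')"
  proof (rule norm_mono[OF fin_supp_block_sums[OF vQ']])
    fix q
    show "\<bar>?Y q\<bar> \<le> \<bar>block_sums a Q' r' q\<bar>"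
    proof (cases "q \<in> Q \<and> cond q")
      case True
      have "\<bar>g (own q)\<bar> \<le> 1" using gb True by (simp add: cond_def)
      then have "\<bar>g (own q)\<bar> * \<bar>\<Sum>i=q..min (r q) (e (own q)). a i\<bar> \<le> \<bar>\<Sum>i=q..min (r q) (e (own q)). a i\<bar>"
        by (simp add: mult_left_le_one_le)
      then show ?thesis using True unfolding Yq by (simp add: block_sums_def Q'_def r'_def abs_mult)
    next
      case False
      then show ?thesis unfolding Yq by (simp only: if_False abs_zero abs_ge_zero)
    qed
  qed
  also have "\<dots> \<le> Jnorm N a" by (rule norm_block_sums_le_Jnorm[OF vQ' fa])
  finally show ?thesis .
qed

text \<open>Blocks of \<open>K\<close> starting inside the test intervals: each lies in at most one of them,
  and pairing with a norming functional \<open>h\<close> of this part reduces it to \<open>\<langle>g, d\<rangle>\<close> for a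
  vector \<open>d\<close> supported on \<open>K\<close> and dominated by block sums of \<open>a\<close>.\<close>

lemma norm_head_blocks_le:
  assumes fa: "fin_supp a" and v: "admissible K e" and vQ: "admissible Q r"
    and gd: "\<And>d. (\<And>i. i \<notin> K \<Longrightarrow> d i = 0) \<Longrightarrow> \<bar>pairing g d\<bar> \<le> N d"
  shows "N (\<lambda>q. if q \<in> Q then \<Sum>i=q..r q. a i * block_weight g {k\<in>K. q \<le> k} e i else 0) \<le> Jnorm N a"
    (is "N ?X \<le> _")
proof -
  have fK: "finite K" using v admissible_finite by blast
  have fQ: "finite Q" using vQ admissible_finite by blast
  have fX: "fin_supp ?X" by (rule fin_supp_finite_set[OF fQ]) auto
  define ow where "ow = block_owner Q r"
  define K' where "K' = owned_blocks K Q r"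
  define e' where "e' = trimmed_ends e Q r"
  have vK': "admissible K' e'" unfolding K'_def e'_def by (rule admissible_owned_blocks[OF v])
  define u where "u = block_sums a K' e'"
  have Xq: "?X q = (\<Sum>k\<in>K. if k \<in> K' \<and> ow k = q then g k * u k else 0)" for q
    unfolding ow_def K'_def e'_def u_def by (rule head_blocks_eq[OF fK vQ])
  obtain L where L: "L \<ge> Suc (\<Sum>q\<in>Q. q)" and "\<And>i. i \<ge> L \<Longrightarrow> ?X i = 0"
    using fin_suppE[OF fX, of "Suc (\<Sum>q\<in>Q. q)"] by blast
  obtain h where h_dom: "\<And>d. (\<And>i. i \<ge> L \<Longrightarrow> d i = 0) \<Longrightarrow> \<bar>pairing h d\<bar> \<le> N d"
    and hX: "pairing h ?X = N ?X"
    using X.norming_functional[OF fX] by blast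
  have hQ: "\<bar>h q\<bar> \<le> 1" if "q \<in> Q" for q
  proof -
    have "q \<le> (\<Sum>q\<in>Q. q)" using that fQ by (intro member_le_sum) auto
    then show ?thesis using norming_unit_bound[of L h q] h_dom L by simp
  qed
  define w where "w = (\<lambda>k. if k \<in> K' then h (ow k) * u k else 0)"
  have "N ?X = (\<Sum>q\<in>Q. h q * ?X q)"
    unfolding hX[symmetric] by (rule pairing_eq_sum[OF fQ]) auto
  also have "\<dots> = (\<Sum>q\<in>Q. \<Sum>k\<in>K. if k \<in> K' \<and> ow k = q then h q * (g k * u k) else 0)"
    unfolding Xq by (simp add: sum_distrib_left if_distrib cong: if_cong)
  also have "\<dots> = (\<Sum>k\<in>K. \<Sum>q\<in>Q. if k \<in> K' \<and> ow k = q then h q * (g k * u k) else 0)"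
    by (rule sum.swap)
  also have "\<dots> = (\<Sum>k\<in>K. g k * w k)"
    using fQ by (intro sum.cong) (auto simp: w_def K'_def owned_blocks_def ow_def if_distrib[of "\<lambda>x. x = _"] sum.delta)
  also have "\<dots> = pairing g w" by (rule pairing_eq_sum[OF fK, symmetric]) (auto simp: w_def K'_def owned_blocks_def)
  also have "\<dots> \<le> N w" using gd[of w] by (auto simp: w_def K'_def owned_blocks_def)
  also have "\<dots> \<le> N u"
  proof (rule norm_mono)
    show "fin_supp u" unfolding u_def by (rule fin_supp_block_sums[OF vK'])
    show "\<bar>w k\<bar> \<le> \<bar>u k\<bar>" for k
      using hQ[of "ow k"] by (auto simp: w_def K'_def owned_blocks_def ow_def abs_mult mult_left_le_one_le)
  qed
  also have "\<dots> \<le> Jnorm N a" unfolding u_def by (rule norm_block_sums_le_Jnorm[OF vK' fa])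
  finally show ?thesis .
qed

lemma Jnorm_mult_block_weight_le:
  assumes fa: "fin_supp a" and v: "admissible K e"
    and gb: "\<And>k. k \<in> K \<Longrightarrow> \<bar>g k\<bar> \<le> 1"
    and gd: "\<And>d. (\<And>i. i \<notin> K \<Longrightarrow> d i = 0) \<Longrightarrow> \<bar>pairing g d\<bar> \<le> N d"
  shows "Jnorm N (\<lambda>i. a i * block_weight g K e i) \<le> 2 * Jnorm N a"
proof (rule Jnorm_leI)
  fix Q r assume vQ: "admissible Q r"
  have fK: "finite K" using v admissible_finite by blast
  define X where "X = (\<lambda>q. if q \<in> Q then \<Sum>i=q..r q. a i * block_weight g {k\<in>K. q \<le> k} e i else 0)"
  define Y where "Y = (\<lambda>q. if q \<in> Q then \<Sum>i=q..r q. a i * block_weight g {k\<in>K. k < q} e i else 0)"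
  have "block_sums (\<lambda>i. a i * block_weight g K e i) Q r q = X q + Y q" for q
  proof (cases "q \<in> Q")
    case True
    have "block_sums (\<lambda>i. a i * block_weight g K e i) Q r q =
        (\<Sum>i=q..r q. a i * block_weight g {k\<in>K. q \<le> k} e i + a i * block_weight g {k\<in>K. k < q} e i)"
      using True by (simp add: block_sums_def block_weight_split[OF fK, of g e _ q] distrib_left)
    then show ?thesis using True by (simp add: X_def Y_def sum.distrib)
  qed (simp add: block_sums_def X_def Y_def)
  then have "block_sums (\<lambda>i. a i * block_weight g K e i) Q r = (\<lambda>q. X q + Y q)" ..
  moreover have "fin_supp X" "fin_supp Y"
    unfolding X_def Y_def by (rule fin_supp_finite_set[OF admissible_finite[OF vQ]], simp)+
  ultimately have "N (block_sums (\<lambda>i. a i * block_weight g K e i) Q r) \<le> N X + N Y"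
    using X.triangle by simp
  also have "\<dots> \<le> 2 * Jnorm N a"
    using norm_head_blocks_le[OF fa v vQ, of g] norm_straddling_blocks_le[OF fa v vQ, of g] gb gd
    unfolding X_def Y_def by simp
  finally show "N (block_sums (\<lambda>i. a i * block_weight g K e i) Q r) \<le> 2 * Jnorm N a" .
qed

text \<open>Test \<open>f a\<close> against an admissible family: a norming functional \<open>g\<close> of its block sums
  turns \<open>N\<close> of them into \<open>\<langle>f, a w\<rangle>\<close>, where the block weight \<open>w\<close> of \<open>g\<close> at most doubles the
  norm of \<open>a\<close>.\<close>

lemma Jnorm_mult_le:
  assumes f: "f \<in> dual_space (Jnorm N)" and fa: "fin_supp a"
  shows "Jnorm N (\<lambda>i. f i * a i) \<le> 2 * dual_norm (Jnorm N) f * Jnorm N a"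
proof (rule Jnorm_leI)
  fix K e assume v: "admissible K e"
  have fK: "finite K" using v admissible_finite by blast
  define c where "c = block_sums (\<lambda>i. f i * a i) K e"
  have fc: "fin_supp c" unfolding c_def by (rule fin_supp_block_sums[OF v])
  define L where "L = Suc (\<Sum>k\<in>K. k)"
  have kL: "k < L" if "k \<in> K" for k
    using member_le_sum[of k K "\<lambda>k. k"] that fK by (simp add: L_def)
  obtain g where g_dom: "\<And>d. (\<And>i. i \<ge> L \<Longrightarrow> d i = 0) \<Longrightarrow> \<bar>pairing g d\<bar> \<le> N d"
    and gc: "pairing g c = N c"
    using X.norming_functional[OF fc] by blast
  have gb: "\<bar>g k\<bar> \<le> 1" if "k \<in> K" for k
    using norming_unit_bound[of L g k] g_dom kL[OF that] by simp
  have gd: "\<bar>pairing g d\<bar> \<le> N d" if d: "\<And>i. i \<notin> K \<Longrightarrow> d i = 0" for d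
  proof (rule g_dom)
    fix i assume "i \<ge> L"
    then have "i \<notin> K" using kL by force
    then show "d i = 0" by (rule d)
  qed
  define b where "b = (\<lambda>i. a i * block_weight g K e i)"
  have "N c = pairing f b"
    using pairing_mult_block_weight[OF fa v, of f g] gc by (simp add: c_def b_def)
  also have "\<dots> \<le> dual_norm (Jnorm N) f * Jnorm N b"
    using J.pairing_le_dual_norm[OF f, of b] fin_supp_mult_right[OF fa] by (simp add: b_def)
  also have "\<dots> \<le> dual_norm (Jnorm N) f * (2 * Jnorm N a)" unfolding b_def
    by (rule mult_left_mono[OF Jnorm_mult_block_weight_le[OF fa v gb gd] J.dual_norm_nonneg[OF f]])
  finally show "N (block_sums (\<lambda>i. f i * a i) K e) \<le> 2 * dual_norm (Jnorm N) f * Jnorm N a"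
    by (simp add: c_def algebra_simps)
qed

end

sublocale unconditional_norm \<subseteq> J: diag_multiplier_norm "Jnorm N" 1 2
  by unfold_locales (rule Jnorm_mult_le)

subsection \<open>The space \<open>J\<^sub>*(X)\<close>\<close>

text \<open>\<open>tail_sum a j\<close> is \<open>v\<^sub>j(a)\<close>, and \<open>partial_sum \<beta>\<close> lists the values of \<open>\<Sum>\<^sub>j \<beta>\<^sub>j v\<^sub>j\<close> on \<open>(e\<^sub>i)\<close>.\<close>

definition tail_sum :: "(nat \<Rightarrow> real) \<Rightarrow> nat \<Rightarrow> real" where
  "tail_sum a j = pairing (\<lambda>i. if j \<le> i then 1 else 0) a"

definition partial_sum :: "(nat \<Rightarrow> real) \<Rightarrow> nat \<Rightarrow> real" where
  "partial_sum \<beta> = (\<lambda>i. \<Sum>j\<le>i. \<beta> j)"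

lemma Jsnorm_eq_dual_norm: "Jsnorm N \<beta> = dual_norm (Jnorm N) (partial_sum \<beta>)"
  by (simp add: Jsnorm_def partial_sum_def)

lemma tail_sum_lessThan: "(\<And>i. i \<ge> L \<Longrightarrow> a i = 0) \<Longrightarrow> tail_sum a j = (\<Sum>i<L. if j \<le> i then a i else 0)"
  unfolding tail_sum_def by (subst pairing_lessThan[of L]) (auto intro!: sum.cong)

lemma tail_sum_eq_0: "(\<And>i. i \<ge> L \<Longrightarrow> a i = 0) \<Longrightarrow> j \<ge> L \<Longrightarrow> tail_sum a j = 0"
  by (subst tail_sum_lessThan[of L]) (auto intro!: sum.neutral)

lemma tail_sum_split:
  assumes fa: "fin_supp a" and km: "k \<le> m"
  shows "tail_sum a k = (\<Sum>i=k..m. a i) + tail_sum a (Suc m)"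
proof -
  obtain L where L: "L \<ge> Suc m" "\<And>i. i \<ge> L \<Longrightarrow> a i = 0" using fin_suppE[OF fa] by blast
  have "(\<Sum>i<L. if k \<le> i then a i else 0) = (\<Sum>i<L. (if k \<le> i \<and> i \<le> m then a i else 0) + (if Suc m \<le> i then a i else 0))"
    by (rule sum.cong) (use km in auto)
  also have "\<dots> = (\<Sum>i<L. if k \<le> i \<and> i \<le> m then a i else 0) + (\<Sum>i<L. if Suc m \<le> i then a i else 0)"
    by (rule sum.distrib)
  also have "(\<Sum>i<L. if k \<le> i \<and> i \<le> m then a i else 0) = (\<Sum>i\<in>{..<L} \<inter> {i. k \<le> i \<and> i \<le> m}. a i)"
    unfolding sum.inter_restrict[OF finite_lessThan] by simp
  also have "{..<L} \<inter> {i. k \<le> i \<and> i \<le> m} = {k..m}" using L by auto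
  finally show ?thesis using tail_sum_lessThan[of L a] L by simp
qed

lemma tail_sum_scale: "fin_supp a \<Longrightarrow> tail_sum (\<lambda>i. c * a i) j = c * tail_sum a j"
  unfolding tail_sum_def by (rule pairing_scale)

lemma tail_sum_diff: "fin_supp a \<Longrightarrow> fin_supp b \<Longrightarrow> tail_sum (\<lambda>i. a i - b i) j = tail_sum a j - tail_sum b j"
  unfolding tail_sum_def by (rule pairing_diff)

lemma pairing_partial_sum:
  assumes fa: "fin_supp a" and fb: "fin_supp \<beta>"
  shows "pairing (partial_sum \<beta>) a = pairing (tail_sum a) \<beta>"
proof -
  obtain L1 L2 where L1: "\<And>i. i \<ge> L1 \<Longrightarrow> a i = 0" and L2: "\<And>i. i \<ge> L2 \<Longrightarrow> \<beta> i = 0"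
    using fa fb fin_supp_iff by meson
  define L where "L = max L1 L2"
  have La: "\<And>i. i \<ge> L \<Longrightarrow> a i = 0" and Lb: "\<And>i. i \<ge> L \<Longrightarrow> \<beta> i = 0" using L1 L2 by (auto simp: L_def)
  have "pairing (partial_sum \<beta>) a = (\<Sum>i<L. (\<Sum>j\<le>i. \<beta> j) * a i)" unfolding partial_sum_def by (rule pairing_lessThan[OF La])
  also have "\<dots> = (\<Sum>i<L. \<Sum>j<L. if j \<le> i then \<beta> j * a i else 0)"
  proof (rule sum.cong[OF refl])
    fix i assume "i \<in> {..<L}"
    then have "(\<Sum>j\<le>i. \<beta> j * a i) = (\<Sum>j\<in>{..<L} \<inter> {j. j \<le> i}. \<beta> j * a i)"
      by (intro sum.cong) auto
    also have "\<dots> = (\<Sum>j<L. if j \<le> i then \<beta> j * a i else 0)"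
      unfolding sum.inter_restrict[OF finite_lessThan] by simp
    finally show "(\<Sum>j\<le>i. \<beta> j) * a i = (\<Sum>j<L. if j \<le> i then \<beta> j * a i else 0)"
      by (simp add: sum_distrib_right)
  qed
  also have "\<dots> = (\<Sum>j<L. \<Sum>i<L. if j \<le> i then \<beta> j * a i else 0)" by (rule sum.swap)
  also have "\<dots> = (\<Sum>j<L. tail_sum a j * \<beta> j)"
  proof (rule sum.cong[OF refl])
    fix j
    have "tail_sum a j = (\<Sum>i<L. if j \<le> i then a i else 0)" by (rule tail_sum_lessThan[OF La])
    have "(\<Sum>i<L. if j \<le> i then \<beta> j * a i else 0) = (\<Sum>i<L. (if j \<le> i then a i else 0) * \<beta> j)"
      by (rule sum.cong) auto
    also have "\<dots> = (\<Sum>i<L. if j \<le> i then a i else 0) * \<beta> j" by (rule sum_distrib_right[symmetric])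
    finally show "(\<Sum>i<L. if j \<le> i then \<beta> j * a i else 0) = tail_sum a j * \<beta> j"
      using \<open>tail_sum a j = _\<close> by simp
  qed
  also have "\<dots> = pairing (tail_sum a) \<beta>" by (rule pairing_lessThan[OF Lb, symmetric])
  finally show ?thesis .
qed

lemma sum_diff_Suc_telescope:
  fixes p :: "nat \<Rightarrow> real"
  shows "k \<le> m \<Longrightarrow> (\<Sum>i=k..m. p i - p (Suc i)) = p k - p (Suc m)"
proof -
  assume km: "k \<le> m"
  have a: "(\<Sum>i=k..m. p (Suc i) - p i) = p (Suc m) - p k" by (rule sum_Suc_diff) (use km in simp)
  have b: "(\<Sum>i=k..m. p i - p (Suc i)) = (\<Sum>i=k..m. - (p (Suc i) - p i))" by (rule sum.cong) auto
  show ?thesis unfolding b sum_negf a by simp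
qed

lemma tail_sum_telescope:
  fixes p :: "nat \<Rightarrow> real"
  assumes L: "\<And>i. i \<ge> L \<Longrightarrow> p i = 0"
  shows "tail_sum (\<lambda>i. p i - p (Suc i)) j = p j"
proof -
  define L' where "L' = Suc (max j L)"
  have Lc': "p i - p (Suc i) = 0" if "i \<ge> L'" for i
  proof -
    have "p i = 0" using L[of i] that by (simp add: L'_def)
    moreover have "p (Suc i) = 0" using L[of "Suc i"] that by (simp add: L'_def)
    ultimately show ?thesis by simp
  qed
  have "tail_sum (\<lambda>i. p i - p (Suc i)) j = (\<Sum>i<L'. if j \<le> i then p i - p (Suc i) else 0)"
    by (rule tail_sum_lessThan) (rule Lc')
  also have "\<dots> = (\<Sum>i\<in>{..<L'} \<inter> {i. j \<le> i}. p i - p (Suc i))"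
    unfolding sum.inter_restrict[OF finite_lessThan] by simp
  also have "{..<L'} \<inter> {i. j \<le> i} = {j..L' - 1}" by (auto simp: L'_def)
  also have "(\<Sum>i=j..L' - 1. p i - p (Suc i)) = p j - p (Suc (L' - 1))"
    by (rule sum_diff_Suc_telescope) (simp add: L'_def)
  also have "p (Suc (L' - 1)) = 0" using L by (simp add: L'_def)
  finally show ?thesis by simp
qed

definition tail_product :: "(nat \<Rightarrow> real) \<Rightarrow> (nat \<Rightarrow> real) \<Rightarrow> nat \<Rightarrow> real" where
  "tail_product a b j = tail_sum a j * tail_sum b j - tail_sum a (Suc j) * tail_sum b (Suc j)"

lemma fin_supp_tail_product:
  assumes "fin_supp a" "fin_supp b"
  shows "fin_supp (tail_product a b)"
proof -
  obtain L where La: "\<And>i. i \<ge> L \<Longrightarrow> a i = 0" using assms(1) fin_supp_iff by blast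
  then show ?thesis unfolding tail_product_def by (intro fin_suppI[of L]) (simp add: tail_sum_eq_0[OF La])
qed

lemma tail_sum_tail_product:
  assumes "fin_supp a"
  shows "tail_sum (tail_product a b) j = tail_sum a j * tail_sum b j"
proof -
  obtain L where La: "\<And>i. i \<ge> L \<Longrightarrow> a i = 0" using assms fin_supp_iff by blast
  then show ?thesis unfolding tail_product_def
    by (intro tail_sum_telescope[of L "\<lambda>j. tail_sum a j * tail_sum b j"]) (simp add: tail_sum_eq_0[OF La])
qed

text \<open>Dropping the first \<open>n + 1\<close> coordinates of \<open>\<beta>\<close>, seen through Abel summation, acts on the
  other side as \<open>dual_drop\<close>: the tail sums of \<open>dual_drop a n\<close> are those of \<open>a\<close> from \<open>n + 1\<close> on
  and vanish before.\<close>

definition dual_drop :: "(nat \<Rightarrow> real) \<Rightarrow> nat \<Rightarrow> nat \<Rightarrow> real" where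
  "dual_drop a n = (\<lambda>i. (if i < Suc n then 0 else a i) - tail_sum a (Suc n) * unit_vec n i)"

lemma fin_supp_dual_drop: "fin_supp a \<Longrightarrow> fin_supp (dual_drop a n)"
  unfolding dual_drop_def by (intro fin_supp_diff fin_supp_drop fin_supp_mult fin_supp_unit_vec)

lemma tail_sum_dual_drop:
  assumes fa: "fin_supp a"
  shows "tail_sum (dual_drop a n) j = (if j < Suc n then 0 else tail_sum a j)"
proof -
  obtain L where L: "\<And>i. i \<ge> L \<Longrightarrow> a i = 0" using fa fin_supp_iff by blast
  have "tail_sum (\<lambda>i. if i < Suc n then 0 else a i) j = (\<Sum>i<L. if j \<le> i then (if i < Suc n then 0 else a i) else 0)"
    by (rule tail_sum_lessThan) (simp add: L)
  also have "\<dots> = tail_sum a (max j (Suc n))"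
    by (subst tail_sum_lessThan[OF L]) (auto intro!: sum.cong)
  finally have drop: "tail_sum (\<lambda>i. if i < Suc n then 0 else a i) j = tail_sum a (max j (Suc n))" .
  moreover have "tail_sum (unit_vec n) j = (if j \<le> n then 1 else 0)"
    by (simp add: tail_sum_def)
  with drop show ?thesis unfolding dual_drop_def
    by (simp add: tail_sum_diff[OF fin_supp_drop[OF fa] fin_supp_mult[OF fin_supp_unit_vec]]
        tail_sum_scale[OF fin_supp_unit_vec] max_def)
qed

lemma pairing_partial_sum_drop:
  assumes fa: "fin_supp a" and fb: "fin_supp \<beta>"
  shows "pairing (partial_sum (\<lambda>i. if i < Suc n then 0 else \<beta> i)) a = pairing (partial_sum \<beta>) (dual_drop a n)"
proof -
  obtain L where L: "\<And>i. i \<ge> L \<Longrightarrow> \<beta> i = 0" using fb fin_supp_iff by blast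
  have "pairing (tail_sum a) (\<lambda>i. if i < Suc n then 0 else \<beta> i) = (\<Sum>i<L. tail_sum a i * (if i < Suc n then 0 else \<beta> i))"
    by (rule pairing_lessThan) (simp add: L)
  also have "\<dots> = pairing (tail_sum (dual_drop a n)) \<beta>"
    by (subst pairing_lessThan[OF L]) (auto simp: tail_sum_dual_drop[OF fa] intro!: sum.cong)
  finally have "pairing (tail_sum a) (\<lambda>i. if i < Suc n then 0 else \<beta> i) = pairing (tail_sum (dual_drop a n)) \<beta>" .
  then show ?thesis
    by (simp add: pairing_partial_sum[OF fa fin_supp_drop[OF fb]] pairing_partial_sum[OF fin_supp_dual_drop[OF fa] fb])
qed

context unconditional_norm
begin

lemma abs_tail_sum_le_Jnorm: "fin_supp a \<Longrightarrow> \<bar>tail_sum a j\<bar> \<le> Jnorm N a"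
proof -
  assume fa: "fin_supp a"
  obtain L where L: "\<And>i. i \<ge> L \<Longrightarrow> a i = 0" using fa fin_supp_iff by blast
  show ?thesis
  proof (cases "j < L")
    case True
    have "tail_sum a j = (\<Sum>i=j..L-1. a i) + tail_sum a (Suc (L - 1))" by (rule tail_sum_split[OF fa]) (use True in auto)
    moreover have "tail_sum a (Suc (L - 1)) = 0" by (rule tail_sum_eq_0[OF L]) auto
    ultimately show ?thesis using abs_interval_sum_le_Jnorm[OF fa, of j "L - 1"] True by simp
  next
    case False
    then show ?thesis using tail_sum_eq_0[OF L, of j] Jnorm_nonneg[OF fa] by simp
  qed
qed

lemma partial_sum_dual_space: "fin_supp \<beta> \<Longrightarrow> partial_sum \<beta> \<in> dual_space (Jnorm N) \<and> Jsnorm N \<beta> \<le> l1 \<beta>"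
proof -
  assume fb: "fin_supp \<beta>"
  have *: "\<bar>pairing (partial_sum \<beta>) a\<bar> \<le> l1 \<beta>" if fa: "fin_supp a" and Ma: "Jnorm N a \<le> 1" for a
  proof -
    have "pairing (partial_sum \<beta>) a = (\<Sum>j\<in>{j. \<beta> j \<noteq> 0}. tail_sum a j * \<beta> j)"
      using pairing_partial_sum[OF fa fb] unfolding pairing_def by simp
    also have "\<bar>\<dots>\<bar> \<le> (\<Sum>j\<in>{j. \<beta> j \<noteq> 0}. \<bar>tail_sum a j * \<beta> j\<bar>)" by (rule sum_abs)
    also have "\<dots> \<le> (\<Sum>j\<in>{j. \<beta> j \<noteq> 0}. \<bar>\<beta> j\<bar>)"
    proof (rule sum_mono)
      fix j
      have "\<bar>tail_sum a j\<bar> \<le> 1" using abs_tail_sum_le_Jnorm[OF fa, of j] Ma by simp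
      then show "\<bar>tail_sum a j * \<beta> j\<bar> \<le> \<bar>\<beta> j\<bar>" by (simp add: abs_mult mult_left_le_one_le)
    qed
    finally show ?thesis unfolding l1_def .
  qed
  show ?thesis unfolding Jsnorm_eq_dual_norm using J.dual_spaceI[OF *] J.dual_norm_le[OF *] by blast
qed

lemma partial_sum_add: "partial_sum (\<lambda>i. a i + b i) = (\<lambda>i. partial_sum a i + partial_sum b i)"
  by (simp add: partial_sum_def sum.distrib)

lemma partial_sum_scale: "partial_sum (\<lambda>i. c * a i) = (\<lambda>i. c * partial_sum a i)"
  by (simp add: partial_sum_def sum_distrib_left)

lemma Jsnorm_nonneg: "fin_supp \<beta> \<Longrightarrow> Jsnorm N \<beta> \<ge> 0"
  unfolding Jsnorm_eq_dual_norm using J.dual_norm_nonneg partial_sum_dual_space by blast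

lemma pairing_partial_sum_le: "fin_supp \<beta> \<Longrightarrow> fin_supp a \<Longrightarrow> \<bar>pairing (partial_sum \<beta>) a\<bar> \<le> Jsnorm N \<beta> * Jnorm N a"
  unfolding Jsnorm_eq_dual_norm using J.pairing_le_dual_norm partial_sum_dual_space by blast

lemma Jsnorm_triangle: "fin_supp a \<Longrightarrow> fin_supp b \<Longrightarrow> Jsnorm N (\<lambda>i. a i + b i) \<le> Jsnorm N a + Jsnorm N b"
proof -
  assume fa: "fin_supp a" and fb: "fin_supp b"
  show ?thesis unfolding Jsnorm_eq_dual_norm[of N "\<lambda>i. a i + b i"]
  proof (rule J.dual_norm_le)
    fix x assume fx: "fin_supp x" and Mx: "Jnorm N x \<le> 1"
    have "pairing (partial_sum (\<lambda>i. a i + b i)) x = pairing (partial_sum a) x + pairing (partial_sum b) x"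
      unfolding partial_sum_add by (rule pairing_add_left)
    then have "\<bar>pairing (partial_sum (\<lambda>i. a i + b i)) x\<bar> \<le> \<bar>pairing (partial_sum a) x\<bar> + \<bar>pairing (partial_sum b) x\<bar>" by simp
    also have "\<dots> \<le> Jsnorm N a * Jnorm N x + Jsnorm N b * Jnorm N x"
      using pairing_partial_sum_le[OF fa fx] pairing_partial_sum_le[OF fb fx] by simp
    also have "\<dots> \<le> Jsnorm N a + Jsnorm N b"
      using Mx Jsnorm_nonneg[OF fa] Jsnorm_nonneg[OF fb] J.nonneg[OF fx]
      by (simp add: add_mono mult_left_le)
    finally show "\<bar>pairing (partial_sum (\<lambda>i. a i + b i)) x\<bar> \<le> Jsnorm N a + Jsnorm N b" .
  qed
qed

lemma Jsnorm_homogeneous_le: "fin_supp a \<Longrightarrow> Jsnorm N (\<lambda>i. c * a i) \<le> \<bar>c\<bar> * Jsnorm N a"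
proof -
  assume fa: "fin_supp a"
  show ?thesis unfolding Jsnorm_eq_dual_norm[of N "\<lambda>i. c * a i"]
  proof (rule J.dual_norm_le)
    fix x assume fx: "fin_supp x" and Mx: "Jnorm N x \<le> 1"
    have "\<bar>pairing (partial_sum (\<lambda>i. c * a i)) x\<bar> = \<bar>c\<bar> * \<bar>pairing (partial_sum a) x\<bar>"
      unfolding partial_sum_scale pairing_scale_left by (simp add: abs_mult)
    also have "\<dots> \<le> \<bar>c\<bar> * (Jsnorm N a * Jnorm N x)"
      using pairing_partial_sum_le[OF fa fx] by (simp add: mult_left_mono)
    also have "\<dots> \<le> \<bar>c\<bar> * Jsnorm N a"
      using Mx Jsnorm_nonneg[OF fa] J.nonneg[OF fx] by (simp add: mult_left_mono mult_left_le)
    finally show "\<bar>pairing (partial_sum (\<lambda>i. c * a i)) x\<bar> \<le> \<bar>c\<bar> * Jsnorm N a" .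
  qed
qed

lemma Jsnorm_homogeneous: "fin_supp a \<Longrightarrow> Jsnorm N (\<lambda>i. c * a i) = \<bar>c\<bar> * Jsnorm N a"
proof (cases "c = 0")
  case True
  assume fa: "fin_supp a"
  have "Jsnorm N (\<lambda>i. 0) = 0"
    using Jsnorm_homogeneous_le[OF fin_supp_zero, of 0] Jsnorm_nonneg[OF fin_supp_zero] by simp
  then show ?thesis using True by simp
next
  case False
  assume fa: "fin_supp a"
  have "Jsnorm N a = Jsnorm N (\<lambda>i. (1 / c) * (c * a i))" using False by simp
  also have "\<dots> \<le> \<bar>1 / c\<bar> * Jsnorm N (\<lambda>i. c * a i)"
    by (rule Jsnorm_homogeneous_le[OF fin_supp_mult[OF fa]])
  finally have "\<bar>c\<bar> * Jsnorm N a \<le> Jsnorm N (\<lambda>i. c * a i)"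
    using False by (simp add: abs_divide field_simps)
  then show ?thesis using Jsnorm_homogeneous_le[OF fa, of c] by simp
qed

lemma abs_partial_sum_le_Jsnorm: "fin_supp \<beta> \<Longrightarrow> \<bar>partial_sum \<beta> j\<bar> \<le> Jsnorm N \<beta>"
proof -
  assume fb: "fin_supp \<beta>"
  have "\<bar>partial_sum \<beta> j\<bar> = \<bar>pairing (partial_sum \<beta>) (unit_vec j)\<bar>" by simp
  also have "\<dots> \<le> Jsnorm N \<beta> * Jnorm N (unit_vec j)" by (rule pairing_partial_sum_le[OF fb fin_supp_unit_vec])
  also have "\<dots> \<le> Jsnorm N \<beta>" using Jnorm_unit_vec_le[of j] Jsnorm_nonneg[OF fb] J.nonneg[OF fin_supp_unit_vec]
    by (simp add: mult_left_le)
  finally show ?thesis .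
qed

lemma abs_le_Jsnorm: "fin_supp \<beta> \<Longrightarrow> \<bar>\<beta> j\<bar> \<le> 2 * Jsnorm N \<beta>"
proof (cases j)
  case 0
  assume fb: "fin_supp \<beta>"
  have "\<beta> j = partial_sum \<beta> 0" using 0 by (simp add: partial_sum_def)
  then show ?thesis using abs_partial_sum_le_Jsnorm[OF fb, of 0] Jsnorm_nonneg[OF fb] by simp
next
  case (Suc j')
  assume fb: "fin_supp \<beta>"
  have "\<beta> j = partial_sum \<beta> j - partial_sum \<beta> j'" using Suc by (simp add: partial_sum_def)
  then show ?thesis using abs_partial_sum_le_Jsnorm[OF fb, of j] abs_partial_sum_le_Jsnorm[OF fb, of j'] by simp
qed

lemma abs_sum_le_Jsnorm: "fin_supp \<beta> \<Longrightarrow> \<bar>pairing (\<lambda>_. 1) \<beta>\<bar> \<le> Jsnorm N \<beta>"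
proof -
  assume fb: "fin_supp \<beta>"
  obtain L where L: "\<And>i. i \<ge> L \<Longrightarrow> \<beta> i = 0" using fb fin_supp_iff by blast
  have "pairing (\<lambda>_. 1) \<beta> = (\<Sum>i<L. \<beta> i)" using pairing_lessThan[OF L] by simp
  also have "\<dots> = partial_sum \<beta> L" using L by (simp add: partial_sum_def lessThan_Suc_atMost[symmetric])
  finally show ?thesis using abs_partial_sum_le_Jsnorm[OF fb, of L] by simp
qed

lemma Jsnorm_le_l1: "fin_supp \<beta> \<Longrightarrow> Jsnorm N \<beta> \<le> l1 \<beta>"
  using partial_sum_dual_space by blast

lemma Jnorm_dual_drop_le: "fin_supp a \<Longrightarrow> Jnorm N (dual_drop a n) \<le> 3 * Jnorm N a"
proof -
  assume fa: "fin_supp a"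
  have "Jnorm N (dual_drop a n)
      \<le> Jnorm N (\<lambda>i. if i < Suc n then 0 else a i) + Jnorm N (\<lambda>i. tail_sum a (Suc n) * unit_vec n i)"
    unfolding dual_drop_def by (rule J.diff[OF fin_supp_drop[OF fa] fin_supp_mult[OF fin_supp_unit_vec]])
  also have "\<dots> \<le> 2 * Jnorm N a + \<bar>tail_sum a (Suc n)\<bar>"
    using Jnorm_drop_below_le[OF fa, of "Suc n"] Jnorm_homogeneous[OF fin_supp_unit_vec, of "tail_sum a (Suc n)" n]
      mult_left_mono[OF Jnorm_unit_vec_le[of n], of "\<bar>tail_sum a (Suc n)\<bar>"] by simp
  also have "\<dots> \<le> 3 * Jnorm N a" using abs_tail_sum_le_Jnorm[OF fa, of "Suc n"] by simp
  finally show ?thesis .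
qed

lemma Jsnorm_drop_below_le:
  assumes fb: "fin_supp \<beta>"
  shows "Jsnorm N (\<lambda>i. if i < n then 0 else \<beta> i) \<le> 3 * Jsnorm N \<beta>"
proof (cases n)
  case 0
  then show ?thesis using Jsnorm_nonneg[OF fb] by simp
next
  case (Suc m)
  show ?thesis unfolding Jsnorm_eq_dual_norm[of N "\<lambda>i. if i < n then 0 else \<beta> i"]
  proof (rule J.dual_norm_le)
    fix a assume fa: "fin_supp a" and Ma: "Jnorm N a \<le> 1"
    have "\<bar>pairing (partial_sum (\<lambda>i. if i < n then 0 else \<beta> i)) a\<bar> \<le> Jsnorm N \<beta> * Jnorm N (dual_drop a m)"
      unfolding Suc pairing_partial_sum_drop[OF fa fb] by (rule pairing_partial_sum_le[OF fb fin_supp_dual_drop[OF fa]])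
    also have "\<dots> \<le> Jsnorm N \<beta> * 3"
      using Jnorm_dual_drop_le[OF fa, of m] Ma Jsnorm_nonneg[OF fb] by (intro mult_left_mono) auto
    finally show "\<bar>pairing (partial_sum (\<lambda>i. if i < n then 0 else \<beta> i)) a\<bar> \<le> 3 * Jsnorm N \<beta>" by simp
  qed
qed

end

sublocale unconditional_norm \<subseteq> Js: summing_basis_norm "Jsnorm N" 2 3
  by unfold_locales (auto intro: Jsnorm_triangle Jsnorm_le_l1 abs_sum_le_Jsnorm Jsnorm_drop_below_le
      abs_le_Jsnorm simp: Jsnorm_homogeneous)

context unconditional_norm
begin

text \<open>\<open>J(X)\<close> is a Banach algebra under the pointwise product of tail sums: a test block
  \<open>[k, e k]\<close> of the product splits into a block of one factor times a tail sum of the other.\<close>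

lemma Jnorm_tail_product_le:
  assumes fa: "fin_supp a" and fb: "fin_supp b"
  shows "Jnorm N (tail_product a b) \<le> 2 * Jnorm N a * Jnorm N b"
proof (rule Jnorm_leI)
  fix K e assume v: "admissible K e"
  define u1 where "u1 = (\<lambda>k. block_sums a K e k * tail_sum b k)"
  define u2 where "u2 = (\<lambda>k. tail_sum a (Suc (e k)) * block_sums b K e k)"
  have fu1: "fin_supp u1" unfolding u1_def by (rule fin_supp_mult_right[OF fin_supp_block_sums[OF v]])
  have fu2: "fin_supp u2" unfolding u2_def by (rule fin_supp_mult[OF fin_supp_block_sums[OF v]])
  have "block_sums (tail_product a b) K e k = u1 k + u2 k" for k
  proof (cases "k \<in> K")
    case True
    have ke: "k \<le> e k" using v True by (simp add: admissible_def)
    have "block_sums (tail_product a b) K e k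
        = tail_sum a k * tail_sum b k - tail_sum a (Suc (e k)) * tail_sum b (Suc (e k))"
      using True sum_diff_Suc_telescope[OF ke, of "\<lambda>j. tail_sum a j * tail_sum b j"]
      by (simp add: block_sums_def tail_product_def)
    then show ?thesis using True tail_sum_split[OF fa ke] tail_sum_split[OF fb ke]
      by (simp add: u1_def u2_def block_sums_def algebra_simps)
  qed (simp add: block_sums_def u1_def u2_def)
  then have "block_sums (tail_product a b) K e = (\<lambda>k. u1 k + u2 k)" ..
  then have "N (block_sums (tail_product a b) K e) \<le> N u1 + N u2"
    using X.triangle[OF fu1 fu2] by simp
  also have "N u1 \<le> Jnorm N b * N (block_sums a K e)"
    by (rule norm_le_weighted[OF fin_supp_block_sums[OF v]])
      (auto simp: u1_def abs_mult mult.commute intro!: mult_right_mono abs_tail_sum_le_Jnorm[OF fb] Jnorm_nonneg[OF fb])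
  also have "N u2 \<le> Jnorm N a * N (block_sums b K e)"
    by (rule norm_le_weighted[OF fin_supp_block_sums[OF v]])
      (auto simp: u2_def abs_mult intro: mult_right_mono abs_tail_sum_le_Jnorm[OF fa] Jnorm_nonneg[OF fa])
  also have "Jnorm N b * N (block_sums a K e) + Jnorm N a * N (block_sums b K e) \<le> Jnorm N b * Jnorm N a + Jnorm N a * Jnorm N b"
    using norm_block_sums_le_Jnorm[OF v fa] norm_block_sums_le_Jnorm[OF v fb] Jnorm_nonneg[OF fa] Jnorm_nonneg[OF fb]
    by (intro add_mono mult_left_mono) auto
  finally show "N (block_sums (tail_product a b) K e) \<le> 2 * Jnorm N a * Jnorm N b" by simp
qed

lemma Jsnorm_mult_tail_sum_le:
  assumes fa: "fin_supp a" and fb: "fin_supp \<beta>"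
  shows "Jsnorm N (\<lambda>j. \<beta> j * tail_sum a j) \<le> 2 * Jnorm N a * Jsnorm N \<beta>"
  unfolding Jsnorm_eq_dual_norm[of N "\<lambda>j. \<beta> j * tail_sum a j"]
proof (rule J.dual_norm_le)
  fix b assume fb': "fin_supp b" and Mb: "Jnorm N b \<le> 1"
  obtain L where L: "\<And>i. i \<ge> L \<Longrightarrow> \<beta> i = 0" using fb fin_supp_iff by blast
  have "pairing (partial_sum (\<lambda>j. \<beta> j * tail_sum a j)) b = pairing (tail_sum b) (\<lambda>j. \<beta> j * tail_sum a j)"
    by (rule pairing_partial_sum[OF fb' fin_supp_mult_right[OF fb]])
  also have "\<dots> = pairing (tail_sum (tail_product a b)) \<beta>"
    using L by (simp add: pairing_lessThan[of L] tail_sum_tail_product[OF fa] algebra_simps)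
  also have "\<dots> = pairing (partial_sum \<beta>) (tail_product a b)"
    by (rule pairing_partial_sum[OF fin_supp_tail_product[OF fa fb'] fb, symmetric])
  finally have "\<bar>pairing (partial_sum (\<lambda>j. \<beta> j * tail_sum a j)) b\<bar> \<le> Jsnorm N \<beta> * Jnorm N (tail_product a b)"
    using pairing_partial_sum_le[OF fb fin_supp_tail_product[OF fa fb']] by simp
  also have "\<dots> \<le> Jsnorm N \<beta> * (2 * Jnorm N a * 1)"
    using Jnorm_tail_product_le[OF fa fb'] mult_left_mono[OF Mb, of "2 * Jnorm N a"]
      Jnorm_nonneg[OF fa] Jsnorm_nonneg[OF fb]
    by (intro mult_left_mono) auto
  finally show "\<bar>pairing (partial_sum (\<lambda>j. \<beta> j * tail_sum a j)) b\<bar> \<le> 2 * Jnorm N a * Jsnorm N \<beta>"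
    by (simp add: algebra_simps)
qed

text \<open>Abel summation moves the multiplier to the other side: \<open>\<langle>\<mu> \<beta>, a\<rangle> = \<langle>\<mu>, \<beta> t\<rangle>\<close>
  with \<open>t\<close> the tail sums of \<open>a\<close>.\<close>

lemma Jsnorm_mult_le:
  assumes mu: "\<mu> \<in> dual_space (Jsnorm N)" and fb: "fin_supp \<beta>"
  shows "Jsnorm N (\<lambda>i. \<mu> i * \<beta> i) \<le> 2 * dual_norm (Jsnorm N) \<mu> * Jsnorm N \<beta>"
  unfolding Jsnorm_eq_dual_norm[of N "\<lambda>i. \<mu> i * \<beta> i"]
proof (rule J.dual_norm_le)
  fix a assume fa: "fin_supp a" and Ma: "Jnorm N a \<le> 1"
  obtain L where L: "\<And>i. i \<ge> L \<Longrightarrow> \<beta> i = 0" using fb fin_supp_iff by blast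
  have "pairing (partial_sum (\<lambda>i. \<mu> i * \<beta> i)) a = pairing (tail_sum a) (\<lambda>i. \<mu> i * \<beta> i)"
    by (rule pairing_partial_sum[OF fa fin_supp_mult[OF fb]])
  also have "\<dots> = pairing \<mu> (\<lambda>j. \<beta> j * tail_sum a j)"
    using L by (simp add: pairing_lessThan[of L] algebra_simps)
  finally have "\<bar>pairing (partial_sum (\<lambda>i. \<mu> i * \<beta> i)) a\<bar>
      \<le> dual_norm (Jsnorm N) \<mu> * Jsnorm N (\<lambda>j. \<beta> j * tail_sum a j)"
    using Js.pairing_le_dual_norm[OF mu fin_supp_mult_right[OF fb]] by simp
  also have "\<dots> \<le> dual_norm (Jsnorm N) \<mu> * (2 * 1 * Jsnorm N \<beta>)"
    using Jsnorm_mult_tail_sum_le[OF fa fb] mult_right_mono[OF Ma, of "Jsnorm N \<beta>"]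
      Jsnorm_nonneg[OF fb] Js.dual_norm_nonneg[OF mu]
    by (intro mult_left_mono) auto
  finally show "\<bar>pairing (partial_sum (\<lambda>i. \<mu> i * \<beta> i)) a\<bar> \<le> 2 * dual_norm (Jsnorm N) \<mu> * Jsnorm N \<beta>"
    by (simp add: algebra_simps)
qed

end

sublocale unconditional_norm \<subseteq> Js: diag_multiplier_norm "Jsnorm N" 2 3
  by unfold_locales (rule Jsnorm_mult_le)

theorem proposition1p17:
  fixes N :: "(nat \<Rightarrow> real) \<Rightarrow> real"
  assumes "normalized_1unc_basis_norm N"
  shows "Ldiag (Jnorm N) = dual_space (Jnorm N)
    \<and> (\<exists>c d. 0 \<le> c \<and> 0 \<le> d \<and> c * d \<le> 2 \<and>
         (\<forall>lam\<in>Ldiag (Jnorm N).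
            dual_norm (Jnorm N) lam \<le> c * op_norm (Jnorm N) lam \<and>
            op_norm (Jnorm N) lam \<le> d * dual_norm (Jnorm N) lam))
    \<and> RI_Kdiag (Jnorm N) = R_one_cspan_dual (Jnorm N)
    \<and> Ldiag (Jsnorm N) = dual_space (Jsnorm N)
    \<and> (\<exists>c d. 0 \<le> c \<and> 0 \<le> d \<and> c * d \<le> 2 \<and>
         (\<forall>lam\<in>Ldiag (Jsnorm N).
            dual_norm (Jsnorm N) lam \<le> c * op_norm (Jsnorm N) lam \<and>
            op_norm (Jsnorm N) lam \<le> d * dual_norm (Jsnorm N) lam))
    \<and> RI_Kdiag (Jsnorm N) = R_one_cspan_dual (Jsnorm N)"
proof -
  interpret unconditional_norm N by unfold_locales (fact assms)
  show ?thesis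
    using J.Ldiag_eq_dual_space J.op_norm_equivalent_dual_norm J.RI_Kdiag_eq_R_one_cspan_dual
      Js.Ldiag_eq_dual_space Js.op_norm_equivalent_dual_norm Js.RI_Kdiag_eq_R_one_cspan_dual
    by blast
qed

end
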